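(* Let $\Omega:[0,\infty)\to(0,\infty)$ be a continuous function increasing to infinity such that $\int_1^\infty \Omega(r)\,\frac{dr}{r^2}<\infty$, $\int_{\mathbb{R}^d} \exp(-\Omega(\|x\|))\,dx<\infty$, and $\Omega(r)>r^a$ on some interval $[r_0,\infty)$ for some $a<1$. Assume that $\Lambda\subseteq\widehat{\mathbb{R}}^d$ is a compact S-set of strict multiplicity, that $E\subseteq\mathbb{R}^d$ is a separated sequence, and that balayage is possible for $(E,\Lambda)$. Let $\epsilon>0$ be such that $K(E,\Lambda_\epsilon)<\infty$ (such $\epsilon$ exists). For this $\epsilon$, let $h\in L^1(\mathbb{R}^d)$ satisfy $h(0)=1$, $\operatorname{supp}(\widehat h)\subseteq\overline{B(0,\epsilon)}$, and $|h(x)|=O(e^{-\Omega(\|x\|)})$ as $\|x\|\to\infty$ (such $h$ exists). Then for each $y\in\mathbb{R}^d$ there are complex numbers $\{a_x(y)\}_{x\in E}$ (coming from balayage of $\delta_y$ onto $E$ for $\Lambda_\epsilon$, i.e. $\widehat{\delta_y}=\big(\sum_{x\in E}a_x(y)\delta_x\big)^\wedge$ on $\Lambda_\epsilon$) such that $$\sup_{y\in\mathbb{R}^d}\sum_{x\in E}|a_x(y)|\le K(E,\Lambda_\epsilon)<\infty$$ and $$\forall y\in\mathbb{R}^d,\ \forall f\in\mathcal{C}(\Lambda),\quad f(y)=\sum_{x\in E}f(x)\,a_x(y)\,h(x-y).$$ In particular, for all $y\in\mathbb{R}^d$ and $\gamma\in\Lambda$, $e^{2\pi i y\cdot\gamma}=\sum_{x\in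 E}a_x(y)h(x-y)e^{2\pi i x\cdot\gamma}$.
   Context: Fourier transform: $\widehat f(\gamma)=\int f(x)e^{-2\pi i x\cdot\gamma}dx$, $F^\vee(x)=\int F(\gamma)e^{2\pi i x\cdot\gamma}d\gamma$, extended to tempered distributions; $\widehat{\mathbb{R}}^d$ denotes $\mathbb{R}^d$ as the frequency domain. For closed $X$, $M_b(X)$ is the space of bounded complex Radon measures with support in $X$, with total variation norm $\|\cdot\|_1$. For closed $\Lambda\subseteq\widehat{\mathbb{R}}^d$, $\mathcal{C}(\Lambda)=\{f\in C_b(\mathbb{R}^d):\operatorname{supp}(\widehat f)\subseteq\Lambda\}$. For closed $E\subseteq\mathbb{R}^d$, balayage is possible for $(E,\Lambda)$ if for every $\mu\in M_b(\mathbb{R}^d)$ there is $\nu\in M_b(E)$ with $\widehat\mu=\widehat\nu$ on $\Lambda$. $K(E,\Lambda)$ is the smallest $K\ge0$ such that for all $\mu\in M_b(\mathbb{R}^d)$, $\inf\{\|\nu\|_1:\nu\in M_b(E),\ \widehat\nu=\widehat\mu\text{ on }\Lambda\}\le K\|\mu\|_1$ ($K(E,\Lambda)=\infty$ if no such $K$). A closed $\Lambda$ is an S-set (set of spectral synthesis) if for all $f\in\mathcal{C}(\Lambda)$ and $\mu\in M_b(\mathbb{R}^d)$ with $\widehat\mu=0$ on $\Lambda$ one has $\int f\,d\mu=0$. A closed $\Lambda$ is a set of strict multiplicity if there is $\mu\in M_b(\Lambda)\setminus\{0\}$ with $|\mu^\vee(x)|\to0$ as $\|x\|\to\infty$. $E$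 is separated if $\inf\{\|x-y\|:x,y\in E,\ x\ne y\}>0$. $\Lambda_\epsilon=\{\gamma\in\widehat{\mathbb{R}}^d:\operatorname{dist}(\gamma,\Lambda)\le\epsilon\}$. *)

theory Defs
  imports "HOL-Analysis.Analysis"
begin

text \<open>A bounded complex Radon measure on R^d (type 'a) is represented as g \<cdot> M where
  M is a finite Borel measure (the total variation |mu|) and g is an M-integrable complex
  density; every bounded complex Radon measure on R^d has such a representation (polar
  decomposition), and every such pair defines one.\<close>

definition bcm :: "'a::euclidean_space measure \<Rightarrow> ('a \<Rightarrow> complex) \<Rightarrow> bool" where
  "bcm M g \<longleftrightarrow> sets M = sets borel \<and> finite_measure M \<and> integrable M g"

definition tvnorm :: "'a::euclidean_space measure \<Rightarrow> ('a \<Rightarrow> complex) \<Rightarrow> real" where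
  "tvnorm M g = (\<integral>x. cmod (g x) \<partial>M)"

definition supp_in :: "'a::euclidean_space measure \<Rightarrow> ('a \<Rightarrow> complex) \<Rightarrow> 'a set \<Rightarrow> bool" where
  "supp_in M g X \<longleftrightarrow> (AE x in M. x \<notin> X \<longrightarrow> g x = 0)"

definition Mb :: "'a::euclidean_space set \<Rightarrow> ('a measure \<times> ('a \<Rightarrow> complex)) set" where
  "Mb X = {(M, g). bcm M g \<and> supp_in M g X}"

definition ftm :: "'a::euclidean_space measure \<Rightarrow> ('a \<Rightarrow> complex) \<Rightarrow> 'a \<Rightarrow> complex" where
  "ftm M g \<gamma> = (\<integral>x. g x * cis (- 2 * pi * (x \<bullet> \<gamma>)) \<partial>M)"

definition iftm :: "'a::euclidean_space measure \<Rightarrow> ('a \<Rightarrow> complex) \<Rightarrow> 'a \<Rightarrow> complex" where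
  "iftm M g x = (\<integral>\<gamma>. g \<gamma> * cis (2 * pi * (x \<bullet> \<gamma>)) \<partial>M)"

definition ft :: "('a::euclidean_space \<Rightarrow> complex) \<Rightarrow> 'a \<Rightarrow> complex" where
  "ft f \<gamma> = (\<integral>x. f x * cis (- 2 * pi * (x \<bullet> \<gamma>)) \<partial>lborel)"

definition dpart :: "'a::euclidean_space \<Rightarrow> ('a \<Rightarrow> complex) \<Rightarrow> 'a \<Rightarrow> complex" where
  "dpart v f x = vector_derivative (\<lambda>t::real. f (x + t *\<^sub>R v)) (at 0)"

definition smooth_fun :: "('a::euclidean_space \<Rightarrow> complex) \<Rightarrow> bool" where
  "smooth_fun f \<longleftrightarrow> (\<forall>vs. set vs \<subseteq> Basis \<longrightarrow>
      continuous_on UNIV (foldr dpart vs f) \<and>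
      (\<forall>v\<in>Basis. \<forall>x. ((\<lambda>t::real. foldr dpart vs f (x + t *\<^sub>R v))
          has_vector_derivative dpart v (foldr dpart vs f) x) (at 0)))"

definition tsupport :: "('a::euclidean_space \<Rightarrow> complex) \<Rightarrow> 'a set" where
  "tsupport f = closure {x. f x \<noteq> 0}"

definition test_fun :: "('a::euclidean_space \<Rightarrow> complex) \<Rightarrow> bool" where
  "test_fun \<psi> \<longleftrightarrow> smooth_fun \<psi> \<and> compact (tsupport \<psi>)"

text \<open>For f in C_b, supp(f^) \<subseteq> \<Lambda> in the sense of tempered distributions:
  <f^, psi> = <f, psi^> = 0 for every test function psi supported off \<Lambda>.\<close>
definition fsupp_in :: "('a::euclidean_space \<Rightarrow> complex) \<Rightarrow> 'a set \<Rightarrow> bool" where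
  "fsupp_in f \<Lambda> \<longleftrightarrow> (\<forall>\<psi>. test_fun \<psi> \<and> tsupport \<psi> \<inter> \<Lambda> = {} \<longrightarrow>
      (\<integral>x. f x * ft \<psi> x \<partial>lborel) = 0)"

definition Cspec :: "'a::euclidean_space set \<Rightarrow> ('a \<Rightarrow> complex) set" where
  "Cspec \<Lambda> = {f. continuous_on UNIV f \<and> bounded (range f) \<and> fsupp_in f \<Lambda>}"

definition balayage :: "'a::euclidean_space set \<Rightarrow> 'a set \<Rightarrow> bool" where
  "balayage E \<Lambda> \<longleftrightarrow> (\<forall>M g. bcm M g \<longrightarrow>
     (\<exists>(N, k)\<in>Mb E. \<forall>\<gamma>\<in>\<Lambda>. ftm N k \<gamma> = ftm M g \<gamma>))"

definition bal_inf :: "'a::euclidean_space set \<Rightarrow> 'a set \<Rightarrow> 'a measure \<Rightarrow> ('a \<Rightarrow> complex) \<Rightarrow> ereal" where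
  "bal_inf E \<Lambda> M g = (INF (N, k)\<in>{(N, k)\<in>Mb E. \<forall>\<gamma>\<in>\<Lambda>. ftm N k \<gamma> = ftm M g \<gamma>}.
       ereal (tvnorm N k))"

text \<open>K(E,\<Lambda>), with value \<infinity> if no finite constant works.\<close>
definition Kbal :: "'a::euclidean_space set \<Rightarrow> 'a set \<Rightarrow> ereal" where
  "Kbal E \<Lambda> = Inf {K. 0 \<le> K \<and> (\<forall>M g. bcm M g \<longrightarrow> bal_inf E \<Lambda> M g \<le> K * ereal (tvnorm M g))}"

definition S_set :: "'a::euclidean_space set \<Rightarrow> bool" where
  "S_set \<Lambda> \<longleftrightarrow> closed \<Lambda> \<and> (\<forall>f\<in>Cspec \<Lambda>. \<forall>M g. bcm M g \<and> (\<forall>\<gamma>\<in>\<Lambda>. ftm M g \<gamma> = 0) \<longrightarrow>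
      (\<integral>x. f x * g x \<partial>M) = 0)"

definition strict_mult :: "'a::euclidean_space set \<Rightarrow> bool" where
  "strict_mult \<Lambda> \<longleftrightarrow> closed \<Lambda> \<and> (\<exists>M g. (M, g) \<in> Mb \<Lambda> \<and> \<not> (AE x in M. g x = 0) \<and>
      ((\<lambda>x. cmod (iftm M g x)) \<longlongrightarrow> 0) at_infinity)"

definition separated :: "'a::euclidean_space set \<Rightarrow> bool" where
  "separated E \<longleftrightarrow> (\<exists>\<delta>>0. \<forall>x\<in>E. \<forall>y\<in>E. x \<noteq> y \<longrightarrow> \<delta> \<le> dist x y)"

definition nbhd :: "'a::euclidean_space set \<Rightarrow> real \<Rightarrow> 'a set" where
  "nbhd \<Lambda> \<epsilon> = {\<gamma>. infdist \<gamma> \<Lambda> \<le> \<epsilon>}"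

end

(*
  For each y, balayage of the Dirac mass at y onto E for the closed neighbourhood \<Lambda>\<^sub>\<epsilon> gives
  discrete measures \<Sum>\<^sub>x c\<^sub>x \<delta>\<^sub>x on E whose Fourier transforms equal e^{-2\<pi>i y\<gamma>} on \<Lambda>\<^sub>\<epsilon> and
  whose total variations approach K(E, \<Lambda>\<^sub>\<epsilon>). As E is separated, the coefficients of a pointwise
  convergent subsequence still have this property: the Fourier identity survives the limit when
  tested against the window h(s x) e^{-2\<pi>i x\<gamma>}, which vanishes at infinity on E, and then s \<rightarrow> 0.
  The limit a(y) has \<ell>\<^sup>1 norm at most K(E, \<Lambda>\<^sub>\<epsilon>).

  Since the Fourier transform of h lives in the closed \<epsilon>-ball, Fubini and Fourier inversion for h
  show that \<Sum>\<^sub>x a\<^sub>x(y) h(x - y) \<delta>\<^sub>x - \<delta>\<^sub>y has Fourier transform vanishing on \<Lambda>. As \<Lambda> is an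
  S-set, this measure annihilates every f \<in> \<C>(\<Lambda>), which is the reconstruction formula.
*)

theory Submission
  imports Defs "HOL-Probability.Characteristic_Functions" "HOL-Library.Diagonal_Subsequence"
begin

section \<open>Gaussian integrals and Fourier inversion\<close>

lemma integral_std_gaussian_iexp:
  "(\<integral>x. complex_of_real (exp (- x\<^sup>2 / 2)) * iexp (t * x) \<partial>lborel) = sqrt (2 * pi) * exp (- t\<^sup>2 / 2)"
proof -
  have "char std_normal_distribution t = (\<integral>x. std_normal_density x *\<^sub>R iexp (t * x) \<partial>lborel)"
    unfolding char_def by (subst integral_density) (auto simp: normal_density_nonneg)
  then have "(\<integral>x. std_normal_density x *\<^sub>R iexp (t * x) \<partial>lborel) = exp (- t\<^sup>2 / 2)"
    by (simp add: char_std_normal_distribution)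
  moreover have "(\<lambda>x. std_normal_density x *\<^sub>R iexp (t * x))
      = (\<lambda>x. (1 / sqrt (2 * pi)) * (complex_of_real (exp (- x\<^sup>2 / 2)) * iexp (t * x)))"
    by (auto simp: std_normal_density_def scaleR_conv_of_real)
  ultimately show ?thesis by (simp add: field_simps)
qed

lemma integrable_scaled_gaussian:
  assumes "a > 0"
  shows "integrable lborel (\<lambda>s::real. exp (- pi * (a * s)^2))"
proof -
  have "integrable lborel (\<lambda>x. std_normal_density x * x ^ (2*0))"
    using std_normal_moment_even[of 0] by (auto simp: has_bochner_integral_iff)
  then have "integrable lborel (\<lambda>x. sqrt (2 * pi) * std_normal_density x)" by simp
  also have "(\<lambda>x. sqrt (2 * pi) * std_normal_density x) = (\<lambda>x::real. exp (- x\<^sup>2 / 2))"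
    by (auto simp: std_normal_density_def)
  finally have "integrable lborel (\<lambda>x::real. exp (- x\<^sup>2 / 2))" .
  from lborel_integrable_real_affine[OF this, of "sqrt (2 * pi) * a" 0] assms
  show ?thesis by (simp add: power_mult_distrib)
qed

lemma integral_scaled_gaussian_cis:
  assumes a: "a > 0"
  shows "(\<integral>s. complex_of_real (exp (- pi * (a * s)^2)) * cis (2 * pi * w * s) \<partial>lborel)
          = complex_of_real (exp (- pi * (w / a)^2) / a)"
proof -
  define c where "c = 1 / (sqrt (2 * pi) * a)"
  have c: "c > 0" using a by (simp add: c_def)
  define T where "T = sqrt (2 * pi) * w / a"
  let ?f = "\<lambda>s. complex_of_real (exp (- pi * (a * s)^2)) * cis (2 * pi * w * s)"
  have subst: "?f (0 + c * x) = complex_of_real (exp (- x\<^sup>2 / 2)) * iexp (T * x)" for x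
  proof -
    have "pi * (a * (c * x))^2 = x\<^sup>2/2"
      using a by (simp add: c_def power_mult_distrib power_divide field_simps)
    then have "exp (- pi * (a * (c * x))^2) = exp (- x\<^sup>2 / 2)" by simp
    moreover have phase: "2 * pi * w * (c * x) = T * x"
      using a by (simp add: c_def T_def field_simps)
    then have "cis (2 * pi * w * (c * x)) = iexp (T * x)"
      unfolding cis_conv_exp phase by simp
    ultimately show ?thesis by simp
  qed
  have "(\<integral>s. ?f s \<partial>lborel) = c *\<^sub>R (\<integral>x. ?f (0 + c * x) \<partial>lborel)"
    using lborel_integral_real_affine[of c ?f 0] c by simp
  also have "\<dots> = c *\<^sub>R complex_of_real (sqrt (2 * pi) * exp (- T\<^sup>2 / 2))"
    by (simp only: subst integral_std_gaussian_iexp)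
  also have "\<dots> = complex_of_real (exp (- pi * (w / a)^2) / a)"
    using a by (simp add: c_def T_def scaleR_conv_of_real power_mult_distrib power_divide)
  finally show ?thesis .
qed

lemma has_bochner_integral_prod_Basis:
  fixes f :: "'a::euclidean_space \<Rightarrow> real \<Rightarrow> complex"
  assumes int: "\<And>b. b \<in> Basis \<Longrightarrow> integrable lborel (f b)"
  shows "has_bochner_integral (lborel::'a measure) (\<lambda>x. \<Prod>b\<in>Basis. f b (x \<bullet> b))
           (\<Prod>b\<in>Basis. \<integral>t. f b t \<partial>lborel)"
proof -
  interpret P: product_sigma_finite "\<lambda>_::'a. lborel::real measure"
    by (simp add: product_sigma_finite_def lborel.sigma_finite_measure_axioms)
  define \<Phi> where "\<Phi> = (\<lambda>g::'a\<Rightarrow>real. \<Sum>b\<in>Basis. g b *\<^sub>R b)"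
  have m\<Phi>: "\<Phi> \<in> measurable (\<Pi>\<^sub>M b\<in>Basis. lborel) borel"
    unfolding \<Phi>_def by measurable
  have [measurable]: "b \<in> Basis \<Longrightarrow> f b \<in> borel_measurable borel" for b
    using int[of b] by auto
  have m: "(\<lambda>x. \<Prod>b\<in>Basis. f b (x \<bullet> b)) \<in> borel_measurable borel"
    by measurable
  have coords: "(\<Prod>b\<in>Basis. f b (\<Phi> g \<bullet> b)) = (\<Prod>b\<in>Basis. f b (g b))" for g
    by (intro prod.cong refl)
       (simp add: \<Phi>_def inner_sum_left inner_Basis if_distrib cong: if_cong)
  have "has_bochner_integral (\<Pi>\<^sub>M b\<in>Basis. lborel) (\<lambda>g. \<Prod>b\<in>Basis. f b (g b))
          (\<Prod>b\<in>Basis. \<integral>t. f b t \<partial>lborel)"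
    using P.product_integrable_prod[of Basis f] P.product_integral_prod[of Basis f] int
    by (simp add: has_bochner_integral_iff)
  then have "has_bochner_integral (\<Pi>\<^sub>M b\<in>Basis. lborel) (\<lambda>g. \<Prod>b\<in>Basis. f b (\<Phi> g \<bullet> b))
          (\<Prod>b\<in>Basis. \<integral>t. f b t \<partial>lborel)"
    by (simp add: coords)
  then have "has_bochner_integral (distr (\<Pi>\<^sub>M b\<in>Basis. lborel) borel \<Phi>)
               (\<lambda>x. \<Prod>b\<in>Basis. f b (x \<bullet> b)) (\<Prod>b\<in>Basis. \<integral>t. f b t \<partial>lborel)"
    by (rule has_bochner_integral_distr[OF m m\<Phi>])
  then show ?thesis
    unfolding \<Phi>_def lborel_eq[symmetric] .
qed

lemma integrable_mult_bounded:
  fixes f g :: "_ \<Rightarrow> 'b::{real_normed_field,banach,second_countable_topology}"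
  assumes f: "integrable M f" and g: "g \<in> borel_measurable M" and B: "\<And>x. norm (g x) \<le> B"
  shows "integrable M (\<lambda>x. f x * g x)"
proof (rule Bochner_Integration.integrable_bound[where f="\<lambda>x. of_real B * f x"])
  have "0 \<le> B" using B[of undefined] norm_ge_zero order_trans by blast
  then show "AE x in M. norm (f x * g x) \<le> norm (of_real B * f x)"
    using B by (auto simp: norm_mult intro!: AE_I2) (metis mult.commute mult_left_mono norm_ge_zero)
qed (use f g in auto)

lemma borel_measurable_cis [measurable]: "cis \<in> borel_measurable borel"
  by (intro borel_measurable_continuous_onI continuous_intros)

lemma cis_sum: "finite A \<Longrightarrow> cis (\<Sum>i\<in>A. f i) = (\<Prod>i\<in>A. cis (f i))"
  by (induct rule: finite_induct) (auto simp: cis_mult[symmetric])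

definition gauss_kernel :: "real \<Rightarrow> 'a::euclidean_space \<Rightarrow> real" where
  "gauss_kernel t \<xi> = exp (- pi * t^2 * (norm \<xi>)^2)"

lemma gauss_kernel_pos: "gauss_kernel t \<xi> > 0"
  and gauss_kernel_le_1: "gauss_kernel t \<xi> \<le> 1"
  by (auto simp: gauss_kernel_def)

lemma gauss_kernel_0 [simp]: "gauss_kernel 0 \<xi> = 1"
  by (simp add: gauss_kernel_def)

lemma borel_measurable_gauss_kernel [measurable]: "gauss_kernel t \<in> borel_measurable borel"
  unfolding gauss_kernel_def by measurable

lemma norm_power2_eq_sum_Basis: "(norm (x::'a::euclidean_space))^2 = (\<Sum>b\<in>Basis. (x \<bullet> b)^2)"
  unfolding power2_norm_eq_inner euclidean_inner[of x x] by (simp add: power2_eq_square)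

lemma gauss_kernel_cis_prod_Basis:
  fixes \<xi> u :: "'a::euclidean_space"
  shows "complex_of_real (gauss_kernel t \<xi>) * cis (2 * pi * (u \<bullet> \<xi>))
    = (\<Prod>b\<in>Basis. complex_of_real (exp (- pi * (t * (\<xi> \<bullet> b))^2)) * cis (2 * pi * (u \<bullet> b) * (\<xi> \<bullet> b)))"
proof -
  have quadratic: "- pi * t^2 * (norm \<xi>)^2 = (\<Sum>b\<in>Basis. - pi * (t * (\<xi> \<bullet> b))^2)"
    by (simp add: norm_power2_eq_sum_Basis sum_distrib_left power_mult_distrib mult_ac)
  have linear: "2 * pi * (u \<bullet> \<xi>) = (\<Sum>b\<in>Basis. 2 * pi * (u \<bullet> b) * (\<xi> \<bullet> b))"
    by (simp add: euclidean_inner[of u \<xi>] sum_distrib_left mult_ac)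
  show ?thesis
    unfolding gauss_kernel_def quadratic linear exp_sum[OF finite_Basis] cis_sum[OF finite_Basis]
      of_real_prod prod.distrib ..
qed

lemma fourier_gauss_kernel:
  fixes u :: "'a::euclidean_space"
  assumes t: "t > 0"
  shows "has_bochner_integral lborel
           (\<lambda>\<xi>. complex_of_real (gauss_kernel t \<xi>) * cis (2 * pi * (u \<bullet> \<xi>)))
           (complex_of_real (gauss_kernel (1 / t) u / t ^ DIM('a)))"
proof -
  have int: "integrable lborel (\<lambda>s. complex_of_real (exp (- pi * (t * s)^2)) * cis (2 * pi * c * s))" for c
    using integrable_of_real[OF integrable_scaled_gaussian[OF t]]
    by (rule integrable_mult_bounded[where B=1]) auto
  have "(\<Prod>b\<in>Basis. \<integral>s. complex_of_real (exp (- pi * (t * s)^2)) * cis (2 * pi * (u \<bullet> b) * s) \<partial>lborel)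
      = (\<Prod>b\<in>Basis. complex_of_real (exp (- pi * ((u \<bullet> b) / t)^2) / t))"
    by (intro prod.cong refl integral_scaled_gaussian_cis[OF t])
  also have "\<dots> = complex_of_real (exp (\<Sum>b\<in>Basis. - pi * ((u \<bullet> b) / t)^2) / t ^ DIM('a))"
    by (simp add: exp_sum prod_dividef flip: of_real_prod)
  also have "(\<Sum>b\<in>Basis. - pi * ((u \<bullet> b) / t)^2) = - pi * (1 / t)^2 * (norm u)^2"
    by (simp add: norm_power2_eq_sum_Basis power_divide sum_distrib_left sum_divide_distrib)
  finally have "(\<Prod>b\<in>Basis. \<integral>s. complex_of_real (exp (- pi * (t * s)^2)) * cis (2 * pi * (u \<bullet> b) * s) \<partial>lborel)
      = complex_of_real (gauss_kernel (1 / t) u / t ^ DIM('a))"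
    by (simp add: gauss_kernel_def)
  with has_bochner_integral_prod_Basis[of "\<lambda>b s. complex_of_real (exp (- pi * (t * s)^2)) * cis (2 * pi * (u \<bullet> b) * s)", OF int]
  show ?thesis
    by (simp add: gauss_kernel_cis_prod_Basis)
qed

lemma integrable_gauss_kernel:
  "t > 0 \<Longrightarrow> integrable lborel (gauss_kernel t :: 'a::euclidean_space \<Rightarrow> real)"
  using integrable.intros[OF fourier_gauss_kernel[of t "0::'a"]]
  by (simp add: complex_of_real_integrable_eq)

lemma integral_gauss_kernel_1: "(\<integral>v. gauss_kernel 1 v \<partial>lborel) = (1::real)"
  using has_bochner_integral_integral_eq[OF fourier_gauss_kernel[of 1 0]]
  by (simp add: gauss_kernel_def complex_eq_iff)

lemma lborel_integral_affine:
  fixes g :: "'a::euclidean_space \<Rightarrow> 'b::{banach,second_countable_topology}"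
  assumes c: "c \<noteq> 0" and [measurable]: "g \<in> borel_measurable borel"
  shows "(\<integral>x. g x \<partial>lborel) = (\<bar>c\<bar>^DIM('a)) *\<^sub>R (\<integral>x. g (t + c *\<^sub>R x) \<partial>lborel)"
proof -
  have "(\<integral>x. g x \<partial>lborel)
      = (\<integral>x. g x \<partial>density (distr lborel borel (\<lambda>x. t + c *\<^sub>R x)) (\<lambda>_. ennreal (\<bar>c\<bar>^DIM('a))))"
    using lborel_affine[OF c, of t] by (simp add: ennreal_power)
  also have "\<dots> = (\<integral>x. (\<bar>c\<bar>^DIM('a)) *\<^sub>R g x \<partial>distr lborel borel (\<lambda>x. t + c *\<^sub>R x))"
    by (rule integral_density) auto
  also have "\<dots> = (\<integral>x. (\<bar>c\<bar>^DIM('a)) *\<^sub>R g (t + c *\<^sub>R x) \<partial>lborel)"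
    by (rule integral_distr) measurable
  finally show ?thesis by simp
qed

lemma cis_inner_diff:
  "cis (- 2 * pi * (x \<bullet> \<xi>)) * cis (2 * pi * (z \<bullet> \<xi>)) = cis (2 * pi * ((z - x) \<bullet> \<xi>))"
  by (simp add: cis_mult inner_diff_left algebra_simps)

text \<open>Gauss--Weierstrass summability: damping the inverse transform of \<open>ft f\<close> by a Gaussian
  of width \<open>1/t\<close> turns it into the convolution of \<open>f\<close> with a Gaussian of width \<open>t\<close>.\<close>

lemma gauss_regularized_inversion:
  fixes f :: "'a::euclidean_space \<Rightarrow> complex"
  assumes f_int: "integrable lborel f" and t: "t > 0"
  shows "(\<integral>\<xi>. ft f \<xi> * cis (2 * pi * (z \<bullet> \<xi>)) * gauss_kernel t \<xi> \<partial>lborel)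
       = (\<integral>v. f (z - t *\<^sub>R v) * gauss_kernel 1 v \<partial>lborel)"
proof -
  have [measurable]: "f \<in> borel_measurable borel" using f_int by auto
  define H where "H x \<xi> = f x * (complex_of_real (gauss_kernel t \<xi>) * cis (2 * pi * ((z - x) \<bullet> \<xi>)))"
    for x \<xi>
  have H_int: "integrable (lborel \<Otimes>\<^sub>M lborel) (\<lambda>(x, \<xi>). H x \<xi>)"
  proof (rule lborel_pair.Fubini_integrable)
    have "norm (H x \<xi>) = norm (f x) * gauss_kernel t \<xi>" for x \<xi>
      using gauss_kernel_pos[of t \<xi>] by (simp add: H_def norm_mult)
    then show "integrable lborel (\<lambda>x. \<integral>\<xi>. norm (case (x, \<xi>) of (x, \<xi>) \<Rightarrow> H x \<xi>) \<partial>lborel)"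
      by (simp add: f_int integrable_gauss_kernel[OF t])
    have "integrable lborel (\<lambda>\<xi>. complex_of_real (gauss_kernel t \<xi>) * cis (2 * pi * ((z - x) \<bullet> \<xi>)))" for x
      by (rule integrable_mult_bounded[where B=1]) (auto intro: integrable_gauss_kernel[OF t])
    then show "AE x in lborel. integrable lborel (\<lambda>\<xi>. case (x, \<xi>) of (x, \<xi>) \<Rightarrow> H x \<xi>)"
      by (simp add: H_def)
  qed (simp add: H_def)
  have "(\<integral>\<xi>. ft f \<xi> * cis (2 * pi * (z \<bullet> \<xi>)) * gauss_kernel t \<xi> \<partial>lborel)
      = (\<integral>\<xi>. (\<integral>x. H x \<xi> \<partial>lborel) \<partial>lborel)"
  proof (intro Bochner_Integration.integral_cong refl)
    fix \<xi> :: 'a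
    have "ft f \<xi> * cis (2 * pi * (z \<bullet> \<xi>)) * gauss_kernel t \<xi>
        = (\<integral>x. f x * cis (- 2 * pi * (x \<bullet> \<xi>)) \<partial>lborel) * (cis (2 * pi * (z \<bullet> \<xi>)) * gauss_kernel t \<xi>)"
      by (simp add: ft_def mult_ac)
    also have "\<dots> = (\<integral>x. f x * cis (- 2 * pi * (x \<bullet> \<xi>)) * (cis (2 * pi * (z \<bullet> \<xi>)) * gauss_kernel t \<xi>) \<partial>lborel)"
      by simp
    also have "\<dots> = (\<integral>x. H x \<xi> \<partial>lborel)"
      by (intro Bochner_Integration.integral_cong refl)
         (unfold H_def cis_inner_diff[symmetric], simp add: mult_ac)
    finally show "ft f \<xi> * cis (2 * pi * (z \<bullet> \<xi>)) * gauss_kernel t \<xi> = (\<integral>x. H x \<xi> \<partial>lborel)" .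
  qed
  also have "\<dots> = (\<integral>x. (\<integral>\<xi>. H x \<xi> \<partial>lborel) \<partial>lborel)"
    by (rule lborel_pair.Fubini_integral[OF H_int])
  also have "\<dots> = (\<integral>x. f x * complex_of_real (gauss_kernel (1 / t) (z - x) / t ^ DIM('a)) \<partial>lborel)"
    unfolding H_def by (simp add: has_bochner_integral_integral_eq[OF fourier_gauss_kernel[OF t]])
  also have "\<dots> = (\<bar>- t\<bar>^DIM('a)) *\<^sub>R
      (\<integral>v. f (z + (- t) *\<^sub>R v) * complex_of_real (gauss_kernel (1 / t) (z - (z + (- t) *\<^sub>R v)) / t ^ DIM('a)) \<partial>lborel)"
    by (rule lborel_integral_affine) (use t in auto)
  also have "\<dots> = (\<integral>v. f (z - t *\<^sub>R v) * gauss_kernel 1 v \<partial>lborel)"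
    using t by (simp add: gauss_kernel_def power_divide power_mult_distrib scaleR_conv_of_real)
  finally show ?thesis .
qed

theorem fourier_inversion:
  fixes f :: "'a::euclidean_space \<Rightarrow> complex"
  assumes f_int: "integrable lborel f" and f_cont: "continuous_on UNIV f"
    and f_bdd: "\<And>x. norm (f x) \<le> B" and ft_int: "integrable lborel (ft f)"
  shows "f z = (\<integral>\<xi>. ft f \<xi> * cis (2 * pi * (z \<bullet> \<xi>)) \<partial>lborel)"
proof -
  have [measurable]: "f \<in> borel_measurable borel" "ft f \<in> borel_measurable borel"
    using f_int ft_int by auto
  define t :: "nat \<Rightarrow> real" where "t n = 1 / (real n + 1)" for n
  have t_pos: "t n > 0" for n by (simp add: t_def)
  have t_lim: "t \<longlonglongrightarrow> 0"
    using LIMSEQ_inverse_real_of_nat unfolding t_def by (simp add: inverse_eq_divide add.commute)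
  have lim_ft: "(\<lambda>n. \<integral>\<xi>. ft f \<xi> * cis (2 * pi * (z \<bullet> \<xi>)) * gauss_kernel (t n) \<xi> \<partial>lborel)
      \<longlonglongrightarrow> (\<integral>\<xi>. ft f \<xi> * cis (2 * pi * (z \<bullet> \<xi>)) \<partial>lborel)"
  proof (rule integral_dominated_convergence[where w="\<lambda>\<xi>. norm (ft f \<xi>)"])
    have "(\<lambda>n. gauss_kernel (t n) \<xi>) \<longlonglongrightarrow> gauss_kernel 0 \<xi>" for \<xi> :: 'a
      unfolding gauss_kernel_def by (intro tendsto_intros t_lim)
    then have "(\<lambda>n. complex_of_real (gauss_kernel (t n) \<xi>)) \<longlonglongrightarrow> 1" for \<xi> :: 'a
      using tendsto_of_real by fastforce
    then show "AE \<xi> in lborel. (\<lambda>n. ft f \<xi> * cis (2 * pi * (z \<bullet> \<xi>)) * gauss_kernel (t n) \<xi>)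
        \<longlonglongrightarrow> ft f \<xi> * cis (2 * pi * (z \<bullet> \<xi>))"
      by (intro AE_I2) (use tendsto_mult_left in fastforce)
    show "AE \<xi> in lborel. norm (ft f \<xi> * cis (2 * pi * (z \<bullet> \<xi>)) * gauss_kernel (t n) \<xi>) \<le> norm (ft f \<xi>)" for n
      by (intro AE_I2) (simp add: norm_mult abs_of_pos[OF gauss_kernel_pos] mult_left_le gauss_kernel_le_1)
  qed (use ft_int in simp_all)
  have lim_f: "(\<lambda>n. \<integral>v. f (z - t n *\<^sub>R v) * gauss_kernel 1 v \<partial>lborel)
      \<longlonglongrightarrow> (\<integral>v. f z * gauss_kernel 1 v \<partial>(lborel::'a measure))"
  proof (rule integral_dominated_convergence[where w="\<lambda>v. B * gauss_kernel 1 v"])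
    have "(\<lambda>n. z - t n *\<^sub>R v) \<longlonglongrightarrow> z - 0 *\<^sub>R v" for v :: 'a
      by (intro tendsto_intros t_lim)
    then have "(\<lambda>n. f (z - t n *\<^sub>R v)) \<longlonglongrightarrow> f z" for v :: 'a
      using continuous_on_tendsto_compose[OF f_cont] by fastforce
    then show "AE v in lborel. (\<lambda>n. f (z - t n *\<^sub>R v) * gauss_kernel 1 v) \<longlonglongrightarrow> f z * gauss_kernel 1 v"
      by (intro AE_I2 tendsto_intros)
    show "AE v in lborel. norm (f (z - t n *\<^sub>R v) * gauss_kernel 1 v) \<le> B * gauss_kernel 1 v" for n
      using f_bdd by (auto simp: norm_mult abs_of_pos[OF gauss_kernel_pos] intro!: AE_I2 mult_right_mono less_imp_le[OF gauss_kernel_pos])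
  qed (use integrable_gauss_kernel[of 1, where 'a='a] in simp_all)
  have "(\<integral>v. f z * gauss_kernel 1 v \<partial>(lborel::'a measure)) = f z"
    using integral_gauss_kernel_1[where 'a='a] by simp
  with lim_f have "(\<lambda>n. \<integral>\<xi>. ft f \<xi> * cis (2 * pi * (z \<bullet> \<xi>)) * gauss_kernel (t n) \<xi> \<partial>lborel) \<longlonglongrightarrow> f z"
    by (simp only: gauss_regularized_inversion[OF f_int t_pos])
  from this lim_ft show ?thesis
    by (rule LIMSEQ_unique)
qed


section \<open>Absolutely summable families\<close>

lemma integrable_count_space_iff_abs_summable_on:
  fixes G :: "'a \<Rightarrow> 'b::{banach,second_countable_topology}"
  assumes "\<And>x. x \<notin> S \<Longrightarrow> G x = 0"
  shows "integrable (count_space UNIV) G \<longleftrightarrow> (\<lambda>x. norm (G x)) summable_on S"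
proof -
  have "(\<lambda>x. indicator S x *\<^sub>R G x) = G" using assms by (auto simp: fun_eq_iff indicator_def)
  then show ?thesis
    using abs_summable_equivalent[of G S] unfolding abs_summable_on_altdef set_integrable_def
    by simp
qed

lemma integral_count_space_eq_infsum:
  fixes G :: "'a \<Rightarrow> 'b::{banach,second_countable_topology}"
  assumes vanish: "\<And>x. x \<notin> S \<Longrightarrow> G x = 0" and summable: "(\<lambda>x. norm (G x)) summable_on S"
  shows "(\<integral>x. G x \<partial>count_space UNIV) = infsum G S"
proof -
  have abs: "Infinite_Set_Sum.abs_summable_on G S"
    using summable abs_summable_equivalent by blast
  have "(\<lambda>x. indicator S x *\<^sub>R G x) = G" using vanish by (auto simp: fun_eq_iff indicator_def)
  then have "infsetsum G S = (\<integral>x. G x \<partial>count_space UNIV)"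
    unfolding infsetsum_altdef set_lebesgue_integral_def by simp
  then show ?thesis
    using infsetsum_infsum[OF abs] by simp
qed

lemma abs_summable_on_mult_bounded:
  fixes c :: "'a \<Rightarrow> 'b::real_normed_div_algebra"
  assumes "(\<lambda>x. norm (c x)) summable_on S" and F: "\<And>x. norm (F x) \<le> C"
  shows "(\<lambda>x. norm (F x * c x)) summable_on S"
proof -
  have "(\<lambda>x. C * norm (c x)) summable_on S" using assms(1) by (rule summable_on_cmult_right)
  then show ?thesis
    by (rule summable_on_comparison_test) (auto simp: norm_mult intro!: mult_right_mono F)
qed

lemma infsum_diff:
  fixes f g :: "'a \<Rightarrow> 'b::{topological_ab_group_add,t2_space}"
  assumes "f summable_on A" "g summable_on A"
  shows "(\<Sum>\<^sub>\<infinity>x\<in>A. f x - g x) = (\<Sum>\<^sub>\<infinity>x\<in>A. f x) - (\<Sum>\<^sub>\<infinity>x\<in>A. g x)"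
proof -
  have "((\<lambda>x. - g x) has_sum - (\<Sum>\<^sub>\<infinity>x\<in>A. g x)) A"
    using has_sum_infsum[OF assms(2)] by (simp add: has_sum_uminus)
  from has_sum_add[OF has_sum_infsum[OF assms(1)] this] show ?thesis
    by (intro infsumI) simp
qed

lemma norm_infsum_mult_le:
  fixes a :: "'a \<Rightarrow> 'b::{real_normed_div_algebra,banach}"
  assumes a: "(\<lambda>x. norm (a x)) summable_on A" and \<phi>: "\<And>x. x \<in> A \<Longrightarrow> norm (\<phi> x) \<le> \<eta>"
  shows "norm (\<Sum>\<^sub>\<infinity>x\<in>A. \<phi> x * a x) \<le> \<eta> * (\<Sum>\<^sub>\<infinity>x\<in>A. norm (a x))"
proof -
  have \<eta>a: "(\<lambda>x. \<eta> * norm (a x)) summable_on A" using a by (rule summable_on_cmult_right)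
  have \<phi>a: "(\<lambda>x. norm (\<phi> x * a x)) summable_on A"
    by (rule summable_on_comparison_test[OF \<eta>a]) (auto simp: norm_mult intro!: mult_right_mono \<phi>)
  have "norm (\<Sum>\<^sub>\<infinity>x\<in>A. \<phi> x * a x) \<le> (\<Sum>\<^sub>\<infinity>x\<in>A. norm (\<phi> x * a x))"
    by (rule norm_infsum_bound[OF \<phi>a])
  also have "\<dots> \<le> (\<Sum>\<^sub>\<infinity>x\<in>A. \<eta> * norm (a x))"
    by (rule infsum_mono[OF \<phi>a \<eta>a]) (auto simp: norm_mult intro!: mult_right_mono \<phi>)
  also have "\<dots> = \<eta> * (\<Sum>\<^sub>\<infinity>x\<in>A. norm (a x))"
    by (rule infsum_cmult_right') 
  finally show ?thesis .
qed

lemma tendsto_infsum_dominated: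
  fixes c :: "'a \<Rightarrow> complex" and \<phi> :: "nat \<Rightarrow> 'a \<Rightarrow> complex"
  assumes vanish: "\<And>x. x \<notin> S \<Longrightarrow> c x = 0" and summable: "(\<lambda>x. norm (c x)) summable_on S"
    and bound: "\<And>n x. norm (\<phi> n x) \<le> B" and lim: "\<And>x. x \<in> S \<Longrightarrow> (\<lambda>n. \<phi> n x) \<longlonglongrightarrow> \<phi>0 x"
  shows "(\<lambda>n. \<Sum>\<^sub>\<infinity>x\<in>S. \<phi> n x * c x) \<longlonglongrightarrow> (\<Sum>\<^sub>\<infinity>x\<in>S. \<phi>0 x * c x)"
proof -
  have bound0: "norm (\<phi>0 x) \<le> B" if "x \<in> S" for x
    using lim[OF that] bound by (intro LIMSEQ_le_const2[OF tendsto_norm]) auto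
  have summable_n: "(\<lambda>x. norm (\<phi> n x * c x)) summable_on S" for n
    by (rule abs_summable_on_mult_bounded[OF summable bound])
  have summable0: "(\<lambda>x. norm (\<phi>0 x * c x)) summable_on S"
    by (rule summable_on_comparison_test[OF summable_on_cmult_right[OF summable, of B]])
       (auto simp: norm_mult intro!: mult_right_mono bound0)
  have "(\<lambda>n. \<integral>x. \<phi> n x * c x \<partial>count_space UNIV) \<longlonglongrightarrow> (\<integral>x. \<phi>0 x * c x \<partial>count_space UNIV)"
  proof (rule integral_dominated_convergence[where w="\<lambda>x. B * norm (c x)"])
    have "(\<lambda>x. norm (B * norm (c x))) summable_on S"
      using summable_on_cmult_right[OF summable, of "\<bar>B\<bar>"] by (simp add: abs_mult)
    then show "integrable (count_space UNIV) (\<lambda>x. B * norm (c x))"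
      by (subst integrable_count_space_iff_abs_summable_on[where S=S]) (auto simp: vanish)
    show "AE x in count_space UNIV. (\<lambda>n. \<phi> n x * c x) \<longlonglongrightarrow> \<phi>0 x * c x"
    proof (rule AE_I2)
      fix x show "(\<lambda>n. \<phi> n x * c x) \<longlonglongrightarrow> \<phi>0 x * c x"
        by (cases "x \<in> S") (auto simp: vanish intro!: tendsto_intros lim)
    qed
    show "AE x in count_space UNIV. norm (\<phi> n x * c x) \<le> B * norm (c x)" for n
      by (auto simp: norm_mult intro!: AE_I2 mult_right_mono bound)
  qed auto
  moreover have "(\<integral>x. \<phi> n x * c x \<partial>count_space UNIV) = (\<Sum>\<^sub>\<infinity>x\<in>S. \<phi> n x * c x)" for n
    by (rule integral_count_space_eq_infsum[OF _ summable_n]) (simp add: vanish)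
  moreover have "(\<integral>x. \<phi>0 x * c x \<partial>count_space UNIV) = (\<Sum>\<^sub>\<infinity>x\<in>S. \<phi>0 x * c x)"
    by (rule integral_count_space_eq_infsum[OF _ summable0]) (simp add: vanish)
  ultimately show ?thesis
    by simp
qed

lemma tendsto_infsum_c0_zero:
  fixes D :: "nat \<Rightarrow> 'a \<Rightarrow> complex" and \<phi> :: "'a \<Rightarrow> complex"
  assumes summable: "\<And>n. (\<lambda>x. norm (D n x)) summable_on S" and bound: "\<And>n. (\<Sum>\<^sub>\<infinity>x\<in>S. norm (D n x)) \<le> K"
    and lim: "\<And>x. x \<in> S \<Longrightarrow> (\<lambda>n. D n x) \<longlonglongrightarrow> 0"
    and \<phi>_bound: "\<And>x. norm (\<phi> x) \<le> B" and \<phi>_c0: "\<And>\<eta>. \<eta> > 0 \<Longrightarrow> finite {x\<in>S. norm (\<phi> x) > \<eta>}"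
  shows "(\<lambda>n. \<Sum>\<^sub>\<infinity>x\<in>S. \<phi> x * D n x) \<longlonglongrightarrow> 0"
proof (rule LIMSEQ_I)
  fix e :: real assume e: "e > 0"
  have K: "0 \<le> K" using bound[of 0] infsum_nonneg[of S "\<lambda>x. norm (D 0 x)"] by simp
  define \<eta> where "\<eta> = e / (2 * (K + 1))"
  have \<eta>: "\<eta> > 0" "\<eta> * K < e / 2" using e K by (simp_all add: \<eta>_def field_simps)
  text \<open>Split \<open>S\<close> into the finitely many points where \<open>|\<phi>| > \<eta>\<close> and a tail where it is small.\<close>
  define F where "F = {x\<in>S. norm (\<phi> x) > \<eta>}"
  have F: "finite F" "F \<subseteq> S" using \<phi>_c0[OF \<eta>(1)] by (auto simp: F_def)
  have "(\<lambda>n. \<Sum>x\<in>F. \<phi> x * D n x) \<longlonglongrightarrow> (\<Sum>x\<in>F. \<phi> x * 0)"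
    using F by (intro tendsto_sum tendsto_intros lim) auto
  then obtain N where N: "\<And>n. n \<ge> N \<Longrightarrow> norm (\<Sum>x\<in>F. \<phi> x * D n x) < e / 2"
    using LIMSEQ_D[of _ 0 "e / 2"] e by fastforce
  show "\<exists>N. \<forall>n\<ge>N. norm ((\<Sum>\<^sub>\<infinity>x\<in>S. \<phi> x * D n x) - 0) < e"
  proof (intro exI allI impI)
    fix n assume "n \<ge> N"
    have summable_tail: "(\<lambda>x. norm (D n x)) summable_on S - F"
      by (rule summable_on_subset_banach[OF summable]) auto
    have "(\<Sum>\<^sub>\<infinity>x\<in>S. \<phi> x * D n x) = (\<Sum>\<^sub>\<infinity>x\<in>F \<union> (S - F). \<phi> x * D n x)"
      using F by (simp add: Un_absorb1)
    also have "\<dots> = (\<Sum>x\<in>F. \<phi> x * D n x) + (\<Sum>\<^sub>\<infinity>x\<in>S - F. \<phi> x * D n x)"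
      using F abs_summable_summable[OF abs_summable_on_mult_bounded[OF summable_tail \<phi>_bound]]
      by (subst infsum_Un_disjoint) auto
    finally have split: "(\<Sum>\<^sub>\<infinity>x\<in>S. \<phi> x * D n x)
        = (\<Sum>x\<in>F. \<phi> x * D n x) + (\<Sum>\<^sub>\<infinity>x\<in>S - F. \<phi> x * D n x)" .
    have "norm (\<Sum>\<^sub>\<infinity>x\<in>S - F. \<phi> x * D n x) \<le> \<eta> * (\<Sum>\<^sub>\<infinity>x\<in>S - F. norm (D n x))"
      by (rule norm_infsum_mult_le[OF summable_tail]) (auto simp: F_def)
    also have "(\<Sum>\<^sub>\<infinity>x\<in>S - F. norm (D n x)) \<le> (\<Sum>\<^sub>\<infinity>x\<in>S. norm (D n x))"
      by (rule infsum_mono_neutral[OF summable_tail summable]) auto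
    also have "\<dots> \<le> K" by (rule bound)
    finally have tail: "norm (\<Sum>\<^sub>\<infinity>x\<in>S - F. \<phi> x * D n x) \<le> \<eta> * K"
      using \<eta>(1) by simp
    have "norm (\<Sum>\<^sub>\<infinity>x\<in>S. \<phi> x * D n x)
        \<le> norm (\<Sum>x\<in>F. \<phi> x * D n x) + norm (\<Sum>\<^sub>\<infinity>x\<in>S - F. \<phi> x * D n x)"
      unfolding split by (rule norm_triangle_ineq)
    then show "norm ((\<Sum>\<^sub>\<infinity>x\<in>S. \<phi> x * D n x) - 0) < e"
      using N[OF \<open>n \<ge> N\<close>] \<eta>(2) tail by simp
  qed
qed

text \<open>Weak-* convergence in \<open>\<ell>\<^sup>1(S)\<close>, tested against a function vanishing at infinity on \<open>S\<close>.\<close>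

lemma tendsto_infsum_c0:
  fixes cn :: "nat \<Rightarrow> 'a \<Rightarrow> complex" and c \<phi> :: "'a \<Rightarrow> complex"
  assumes summable_n: "\<And>n. (\<lambda>x. norm (cn n x)) summable_on S" and bound_n: "\<And>n. (\<Sum>\<^sub>\<infinity>x\<in>S. norm (cn n x)) \<le> K"
    and summable: "(\<lambda>x. norm (c x)) summable_on S" and bound: "(\<Sum>\<^sub>\<infinity>x\<in>S. norm (c x)) \<le> K"
    and lim: "\<And>x. x \<in> S \<Longrightarrow> (\<lambda>n. cn n x) \<longlonglongrightarrow> c x"
    and \<phi>_bound: "\<And>x. norm (\<phi> x) \<le> B" and \<phi>_c0: "\<And>\<eta>. \<eta> > 0 \<Longrightarrow> finite {x\<in>S. norm (\<phi> x) > \<eta>}"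
  shows "(\<lambda>n. \<Sum>\<^sub>\<infinity>x\<in>S. \<phi> x * cn n x) \<longlonglongrightarrow> (\<Sum>\<^sub>\<infinity>x\<in>S. \<phi> x * c x)"
proof -
  have sum: "(\<lambda>x. norm (cn n x) + norm (c x)) summable_on S" for n
    by (rule summable_on_add[OF summable_n summable])
  have summable_diff: "(\<lambda>x. norm (cn n x - c x)) summable_on S" for n
    by (rule summable_on_comparison_test[OF sum]) (auto intro: norm_triangle_ineq4)
  have "(\<Sum>\<^sub>\<infinity>x\<in>S. norm (cn n x - c x)) \<le> (\<Sum>\<^sub>\<infinity>x\<in>S. norm (cn n x) + norm (c x))" for n
    by (rule infsum_mono[OF summable_diff sum]) (rule norm_triangle_ineq4)
  also have "(\<Sum>\<^sub>\<infinity>x\<in>S. norm (cn n x) + norm (c x)) \<le> 2 * K" for n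
    using bound_n[of n] bound by (simp add: infsum_add[OF summable_n summable])
  finally have "(\<lambda>n. \<Sum>\<^sub>\<infinity>x\<in>S. \<phi> x * (cn n x - c x)) \<longlonglongrightarrow> 0"
    using lim by (intro tendsto_infsum_c0_zero[OF summable_diff _ _ \<phi>_bound \<phi>_c0])
      (auto simp: LIM_zero_iff)
  moreover have "(\<Sum>\<^sub>\<infinity>x\<in>S. \<phi> x * (cn n x - c x)) = (\<Sum>\<^sub>\<infinity>x\<in>S. \<phi> x * cn n x) - (\<Sum>\<^sub>\<infinity>x\<in>S. \<phi> x * c x)" for n
    unfolding right_diff_distrib
    by (intro infsum_diff abs_summable_summable[OF abs_summable_on_mult_bounded[OF summable_n \<phi>_bound]]
        abs_summable_summable[OF abs_summable_on_mult_bounded[OF summable \<phi>_bound]])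
  ultimately show ?thesis
    by (simp add: LIM_zero_iff)
qed

lemma pointwise_convergent_subsequence:
  fixes f :: "nat \<Rightarrow> 'a \<Rightarrow> complex"
  assumes "countable S" and bound: "\<And>n x. norm (f n x) \<le> M"
  shows "\<exists>d c. strict_mono d \<and> (\<forall>x. x \<notin> S \<longrightarrow> c x = 0) \<and> (\<forall>x\<in>S. (\<lambda>k. f (d k) x) \<longlonglongrightarrow> c x)"
proof -
  let ?P = "\<lambda>n s. convergent (\<lambda>k. f (s k) (from_nat_into S n))"
  interpret subseqs ?P
  proof (unfold convergent_def subseqs_def comp_def, intro allI impI)
    fix n :: nat and s :: "nat \<Rightarrow> nat" assume "strict_mono s"
    have "\<And>k. f (s k) (from_nat_into S n) \<in> cball 0 M"
      using bound by simp
    then obtain l r where "strict_mono r" "((\<lambda>k. f (s k) (from_nat_into S n)) \<circ> r) \<longlonglongrightarrow> l"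
      using compact_cball compact_imp_seq_compact seq_compactE by metis
    then show "\<exists>r. strict_mono (r::nat\<Rightarrow>nat) \<and> (\<exists>l. (\<lambda>k. f (s (r k)) (from_nat_into S n)) \<longlonglongrightarrow> l)"
      by (auto simp: comp_def)
  qed
  have "?P n diagseq" for n
  proof -
    have "?P n (seqseq (Suc n) \<circ> (\<lambda>k. fold_reduce (Suc n) k (Suc n + k)))"
      unfolding comp_def
      by (intro convergent_subseq_convergent[OF seqseq_holds, unfolded comp_def] subseq_diagonal_rest)
    then have "?P n (diagseq \<circ> (+) (Suc n))"
      by (simp only: diagseq_seqseq)
    then obtain L where "(\<lambda>k. f (diagseq (k + Suc n)) (from_nat_into S n)) \<longlonglongrightarrow> L"
      by (auto simp: convergent_def comp_def add.commute)
    then show ?thesis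
      using LIMSEQ_offset[where f="\<lambda>k. f (diagseq k) (from_nat_into S n)" and k="Suc n"]
      unfolding convergent_def by blast
  qed
  moreover have "\<exists>n. x = from_nat_into S n" if "x \<in> S" for x
    using from_nat_into_surj[OF assms(1) that] by metis
  ultimately have convergent: "\<forall>x\<in>S. convergent (\<lambda>k. f (diagseq k) x)"
    by blast
  show ?thesis
  proof (intro exI conjI)
    show "strict_mono diagseq" by (rule subseq_diagseq)
    show "\<forall>x. x \<notin> S \<longrightarrow> (if x \<in> S then lim (\<lambda>k. f (diagseq k) x) else 0) = 0" by simp
    show "\<forall>x\<in>S. (\<lambda>k. f (diagseq k) x) \<longlonglongrightarrow> (if x \<in> S then lim (\<lambda>k. f (diagseq k) x) else 0)"
      using convergent by (simp add: convergent_LIMSEQ_iff)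
  qed
qed

lemma abs_summable_on_pointwise_limit:
  fixes c :: "'a \<Rightarrow> complex"
  assumes lim: "\<And>x. x \<in> S \<Longrightarrow> (\<lambda>n. cn n x) \<longlonglongrightarrow> c x"
    and summable_n: "\<And>n. (\<lambda>x. norm (cn n x)) summable_on S"
    and bound_n: "\<And>n. (\<Sum>\<^sub>\<infinity>x\<in>S. norm (cn n x)) \<le> b n" and b: "b \<longlonglongrightarrow> K"
  shows "(\<lambda>x. norm (c x)) summable_on S" and "(\<Sum>\<^sub>\<infinity>x\<in>S. norm (c x)) \<le> K"
proof -
  have finite_sums: "(\<Sum>x\<in>F. norm (c x)) \<le> K" if F: "finite F" "F \<subseteq> S" for F
  proof (rule LIMSEQ_le[OF _ b])
    show "(\<lambda>n. \<Sum>x\<in>F. norm (cn n x)) \<longlonglongrightarrow> (\<Sum>x\<in>F. norm (c x))"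
      using F by (intro tendsto_sum tendsto_norm lim) auto
    show "\<exists>N. \<forall>n\<ge>N. (\<Sum>x\<in>F. norm (cn n x)) \<le> b n"
      using F by (auto intro!: order_trans[OF finite_sum_le_infsum[OF summable_n] bound_n])
  qed
  then show summable: "(\<lambda>x. norm (c x)) summable_on S"
    by (intro nonneg_bdd_above_summable_on bdd_aboveI[of _ K]) auto
  show "(\<Sum>\<^sub>\<infinity>x\<in>S. norm (c x)) \<le> K"
    by (rule infsum_le_finite_sums[OF summable finite_sums])
qed


section \<open>Separated sets\<close>

lemma separated_imp_finite_Int_bounded:
  fixes E :: "'a::euclidean_space set"
  assumes sep: "separated E" and "bounded S"
  shows "finite (E \<inter> S)"
proof (rule ccontr)
  assume inf: "infinite (E \<inter> S)"
  obtain \<delta> where \<delta>: "\<delta> > 0" "\<And>x y. x \<in> E \<Longrightarrow> y \<in> E \<Longrightarrow> x \<noteq> y \<Longrightarrow> \<delta> \<le> dist x y"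
    using sep unfolding separated_def by blast
  have "compact (closure S)" using \<open>bounded S\<close> by (simp add: compact_closure)
  then obtain x where "x islimpt (E \<inter> S)"
    using inf unfolding compact_eq_Bolzano_Weierstrass
    by (metis closure_subset inf_le2 subset_trans)
  then obtain y1 where y1: "y1 \<in> E \<inter> S" "y1 \<noteq> x" "dist y1 x < \<delta>/2"
    using \<delta>(1) unfolding islimpt_approachable by (meson half_gt_zero)
  then have "0 < dist y1 x" by simp
  then obtain y2 where y2: "y2 \<in> E \<inter> S" "y2 \<noteq> x" "dist y2 x < min (\<delta>/2) (dist y1 x)"
    using \<delta>(1) \<open>x islimpt _\<close> unfolding islimpt_approachable by (metis min_less_iff_conj half_gt_zero)
  have "dist y1 y2 < \<delta>"
    using y1 y2 dist_triangle_half_r[of x y1 \<delta> y2] by (smt (verit) dist_commute dist_triangle)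
  then show False
    using \<delta>(2)[of y1 y2] y1 y2 by auto
qed

lemma separated_imp_countable:
  fixes E :: "'a::euclidean_space set"
  assumes "separated E"
  shows "countable E"
proof -
  have "E = (\<Union>n::nat. E \<inter> cball 0 (real n))"
    by (auto simp: real_arch_simple)
  moreover have "countable (\<Union>n::nat. E \<inter> cball 0 (real n))"
    by (intro countable_UN) (auto intro: countable_finite separated_imp_finite_Int_bounded[OF assms])
  ultimately show ?thesis by simp
qed

lemma borel_measurable_countable_support:
  fixes c :: "'a::{t1_space, second_countable_topology} \<Rightarrow> 'b::topological_space"
  assumes "countable S" and const: "\<And>x. x \<notin> S \<Longrightarrow> c x = z"
  shows "c \<in> borel_measurable borel"
proof (rule borel_measurableI)
  fix U :: "'b set" assume "open U"
  have subset_S: "A \<subseteq> S \<Longrightarrow> A \<in> sets borel" for A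
    by (rule sets.countable) (auto intro: countable_subset[OF _ \<open>countable S\<close>] simp: closed_singleton borel_closed)
  show "c -` U \<inter> space borel \<in> sets borel"
  proof (cases "z \<in> U")
    case True
    have "c -` U = UNIV - (S - c -` U)" using const True by auto
    moreover have "S - c -` U \<in> sets borel" using subset_S[of "S - c -` U"] by auto
    ultimately show ?thesis by (metis borel_comp space_borel Int_UNIV_right Compl_eq_Diff_UNIV)
  next
    case False
    have "c -` U = S \<inter> c -` U" using const False by auto
    then show ?thesis using subset_S[of "S \<inter> c -` U"] by auto
  qed
qed

section \<open>Measures with countable support\<close>

text \<open>The complex measure \<open>\<Sum>\<^sub>x c x \<delta>\<^sub>x\<close> in the polar form (\<open>|\<mu>|\<close>, \<open>d\<mu>/d|\<mu>|\<close>)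
  used by \<^const>\<open>bcm\<close>.\<close>

definition point_mass_measure :: "('a::euclidean_space \<Rightarrow> complex) \<Rightarrow> 'a measure" where
  "point_mass_measure c = distr (density (count_space UNIV) (\<lambda>x. ennreal (norm (c x)))) borel (\<lambda>x. x)"

definition point_mass_phase :: "('a::euclidean_space \<Rightarrow> complex) \<Rightarrow> 'a \<Rightarrow> complex" where
  "point_mass_phase c x = c x / complex_of_real (norm (c x))"

definition ft_coeffs :: "('a::euclidean_space \<Rightarrow> complex) \<Rightarrow> 'a set \<Rightarrow> 'a \<Rightarrow> complex" where
  "ft_coeffs c S \<gamma> = (\<Sum>\<^sub>\<infinity>x\<in>S. c x * cis (- 2 * pi * (x \<bullet> \<gamma>)))"

lemma sets_point_mass_measure [simp]: "sets (point_mass_measure c) = sets borel"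
  by (simp add: point_mass_measure_def)

lemma point_mass_phase_mult: "complex_of_real (norm (c x)) * point_mass_phase c x = c x"
  by (cases "c x = 0") (auto simp: point_mass_phase_def)

locale point_masses =
  fixes c :: "'a::euclidean_space \<Rightarrow> complex" and S :: "'a set"
  assumes countable: "countable S" and vanish: "\<And>x. x \<notin> S \<Longrightarrow> c x = 0"
    and summable: "(\<lambda>x. norm (c x)) summable_on S"
begin

lemma borel_measurable_coeffs [measurable]: "c \<in> borel_measurable borel"
  by (rule borel_measurable_countable_support[OF countable vanish])

lemma borel_measurable_phase [measurable]: "point_mass_phase c \<in> borel_measurable borel"
  unfolding point_mass_phase_def by measurable

lemma integral_point_masses:
  fixes F :: "'a \<Rightarrow> complex"
  assumes [measurable]: "F \<in> borel_measurable borel" and F: "\<And>x. norm (F x) \<le> C"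
  shows "integrable (point_mass_measure c) (\<lambda>x. F x * point_mass_phase c x)"
    and "(\<integral>x. F x * point_mass_phase c x \<partial>point_mass_measure c) = (\<Sum>\<^sub>\<infinity>x\<in>S. F x * c x)"
proof -
  have id: "(\<lambda>x. x) \<in> measurable (density (count_space UNIV) (\<lambda>x. ennreal (norm (c x)))) borel"
    by simp
  have eq: "(\<lambda>x. norm (c x) *\<^sub>R (F x * point_mass_phase c x)) = (\<lambda>x. F x * c x)"
    using point_mass_phase_mult by (auto simp: fun_eq_iff scaleR_conv_of_real mult_ac)
  have vanish': "\<And>x. x \<notin> S \<Longrightarrow> F x * c x = 0" using vanish by simp
  have summable': "(\<lambda>x. norm (F x * c x)) summable_on S"
    by (rule abs_summable_on_mult_bounded[OF summable F])
  show "integrable (point_mass_measure c) (\<lambda>x. F x * point_mass_phase c x)"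
    unfolding point_mass_measure_def
    using summable' by (simp add: integrable_distr_eq[OF id] integrable_density eq
        integrable_count_space_iff_abs_summable_on[OF vanish'])
  have "(\<integral>x. F x * point_mass_phase c x \<partial>point_mass_measure c)
      = (\<integral>x. F x * point_mass_phase c x \<partial>density (count_space UNIV) (\<lambda>x. ennreal (norm (c x))))"
    unfolding point_mass_measure_def by (rule integral_distr[OF id]) measurable
  also have "\<dots> = (\<integral>x. norm (c x) *\<^sub>R (F x * point_mass_phase c x) \<partial>count_space UNIV)"
    by (rule integral_density) auto
  also have "\<dots> = (\<Sum>\<^sub>\<infinity>x\<in>S. F x * c x)"
    unfolding eq by (rule integral_count_space_eq_infsum[OF vanish' summable'])
  finally show "(\<integral>x. F x * point_mass_phase c x \<partial>point_mass_measure c) = (\<Sum>\<^sub>\<infinity>x\<in>S. F x * c x)" .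
qed

lemma bcm_point_masses: "bcm (point_mass_measure c) (point_mass_phase c)"
  unfolding bcm_def
proof (intro conjI)
  have "integrable (count_space UNIV) (\<lambda>x. norm (c x))"
    using summable by (simp add: integrable_count_space_iff_abs_summable_on[where S=S] vanish)
  then have "(\<integral>\<^sup>+x. ennreal (norm (c x)) \<partial>count_space UNIV) < \<infinity>"
    unfolding integrable_iff_bounded by simp
  then show "finite_measure (point_mass_measure c)"
    by (intro finite_measureI) (simp add: point_mass_measure_def emeasure_distr emeasure_density)
  show "integrable (point_mass_measure c) (point_mass_phase c)"
    using integral_point_masses(1)[of "\<lambda>_. 1" 1] by simp
qed simp

lemma ftm_point_masses: "ftm (point_mass_measure c) (point_mass_phase c) \<gamma> = ft_coeffs c S \<gamma>"
  unfolding ftm_def ft_coeffs_def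
  using integral_point_masses(2)[of "\<lambda>x. cis (- 2 * pi * (x \<bullet> \<gamma>))" 1]
  by (simp add: mult.commute)

end

definition atom_weight :: "'a measure \<Rightarrow> 'a set \<Rightarrow> 'a \<Rightarrow> real" where
  "atom_weight N E x = indicator E x * measure N {x}"

lemma atom_weight_nonneg: "atom_weight N E x \<ge> 0"
  by (simp add: atom_weight_def)

definition atom_coeffs :: "'a measure \<Rightarrow> 'a set \<Rightarrow> ('a \<Rightarrow> complex) \<Rightarrow> 'a \<Rightarrow> complex" where
  "atom_coeffs N E k x = complex_of_real (atom_weight N E x) * k x"

locale countable_atoms =
  fixes N :: "'a::euclidean_space measure" and E :: "'a set"
  assumes sets_N: "sets N = sets borel" and finite_N: "finite_measure N" and countable: "countable E"
begin


lemma sets_E: "E \<in> sets N"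
  using sets.countable[OF _ countable, of borel] sets_N by (auto simp: closed_singleton borel_closed)

lemma density_indicator_eq_atoms:
  "density N (\<lambda>x. ennreal (indicator E x)) = distr (density (count_space UNIV) (\<lambda>x. ennreal (atom_weight N E x))) borel (\<lambda>x. x)"
proof (rule measure_eqI)
  fix A assume "A \<in> sets (density N (\<lambda>x. ennreal (indicator E x)))"
  then have A: "A \<in> sets borel" "E \<inter> A \<in> sets N" using sets_N sets_E by auto
  have "emeasure (density N (\<lambda>x. ennreal (indicator E x))) A
      = (\<integral>\<^sup>+x. ennreal (indicator E x) * indicator A x \<partial>N)"
    by (rule emeasure_density) (use A sets_N sets_E in auto)
  also have "\<dots> = (\<integral>\<^sup>+x. indicator (E \<inter> A) x \<partial>N)"
    by (rule nn_integral_cong) (auto simp: indicator_def)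
  also have "\<dots> = emeasure N (E \<inter> A)"
    using A by simp
  also have "\<dots> = (\<integral>\<^sup>+x. emeasure N {x} \<partial>count_space (E \<inter> A))"
    by (rule emeasure_countable_singleton)
       (use sets_N countable in \<open>auto simp: closed_singleton borel_closed intro: countable_subset\<close>)
  also have "\<dots> = (\<integral>\<^sup>+x. emeasure N {x} * indicator (E \<inter> A) x \<partial>count_space UNIV)"
    by (rule nn_integral_count_space_indicator) simp
  also have "\<dots> = (\<integral>\<^sup>+x. ennreal (atom_weight N E x) * indicator A x \<partial>count_space UNIV)"
    using finite_measure.emeasure_eq_measure[OF finite_N]
    by (intro nn_integral_cong) (auto simp: atom_weight_def indicator_def)
  also have "\<dots> = emeasure (density (count_space UNIV) (\<lambda>x. ennreal (atom_weight N E x))) A"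
    by (rule emeasure_density[symmetric]) auto
  also have "\<dots> = emeasure (distr (density (count_space UNIV) (\<lambda>x. ennreal (atom_weight N E x))) borel (\<lambda>x. x)) A"
    using A by (simp add: emeasure_distr)
  finally show "emeasure (density N (\<lambda>x. ennreal (indicator E x))) A
      = emeasure (distr (density (count_space UNIV) (\<lambda>x. ennreal (atom_weight N E x))) borel (\<lambda>x. x)) A" .
qed (simp add: sets_N)

lemma integral_eq_infsum_atoms:
  fixes G :: "'a \<Rightarrow> 'b::{banach,second_countable_topology}"
  assumes [measurable]: "G \<in> borel_measurable borel" and G: "integrable N G"
    and vanish: "AE x in N. x \<notin> E \<longrightarrow> G x = 0"
  shows "(\<lambda>x. norm (atom_weight N E x *\<^sub>R G x)) summable_on E"
    and "(\<integral>x. G x \<partial>N) = (\<Sum>\<^sub>\<infinity>x\<in>E. atom_weight N E x *\<^sub>R G x)"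
proof -
  have [measurable]: "G \<in> borel_measurable N"
    by (simp add: measurable_cong_sets[OF sets_N refl])
  have [measurable]: "E \<in> sets N" by (rule sets_E)
  have id: "(\<lambda>x. x) \<in> measurable (density (count_space UNIV) (\<lambda>x. ennreal (atom_weight N E x))) borel"
    by simp
  have vanish': "x \<notin> E \<Longrightarrow> atom_weight N E x *\<^sub>R G x = 0" for x
    by (simp add: atom_weight_def)
  have "integrable N (\<lambda>x. indicator E x *\<^sub>R G x)"
    using G sets_E by (rule integrable_mult_indicator[rotated])
  then have "integrable (density N (\<lambda>x. ennreal (indicator E x))) G"
    by (subst integrable_density) auto
  then have "integrable (density (count_space UNIV) (\<lambda>x. ennreal (atom_weight N E x))) G"
    by (simp add: density_indicator_eq_atoms integrable_distr_eq[OF id])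
  then have "integrable (count_space UNIV) (\<lambda>x. atom_weight N E x *\<^sub>R G x)"
    by (subst (asm) integrable_density) (auto simp: atom_weight_nonneg)
  then show summable: "(\<lambda>x. norm (atom_weight N E x *\<^sub>R G x)) summable_on E"
    by (simp add: integrable_count_space_iff_abs_summable_on[OF vanish'])
  have "(\<integral>x. G x \<partial>N) = (\<integral>x. indicator E x *\<^sub>R G x \<partial>N)"
    using vanish by (intro integral_cong_AE) (auto simp: indicator_def)
  also have "\<dots> = (\<integral>x. G x \<partial>density N (\<lambda>x. ennreal (indicator E x)))"
    by (rule integral_density[symmetric]) auto
  also have "\<dots> = (\<integral>x. G x \<partial>density (count_space UNIV) (\<lambda>x. ennreal (atom_weight N E x)))"
    by (simp add: density_indicator_eq_atoms integral_distr[OF id])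
  also have "\<dots> = (\<integral>x. atom_weight N E x *\<^sub>R G x \<partial>count_space UNIV)"
    by (rule integral_density) (auto simp: atom_weight_nonneg)
  also have "\<dots> = (\<Sum>\<^sub>\<infinity>x\<in>E. atom_weight N E x *\<^sub>R G x)"
    by (rule integral_count_space_eq_infsum[OF vanish' summable])
  finally show "(\<integral>x. G x \<partial>N) = (\<Sum>\<^sub>\<infinity>x\<in>E. atom_weight N E x *\<^sub>R G x)" .
qed

end

lemma Mb_countable_coeffs:
  fixes N :: "'a::euclidean_space measure"
  assumes "(N, k) \<in> Mb E" and "countable E"
  shows "\<And>x. x \<notin> E \<Longrightarrow> atom_coeffs N E k x = 0"
    and "(\<lambda>x. norm (atom_coeffs N E k x)) summable_on E"
    and "(\<Sum>\<^sub>\<infinity>x\<in>E. norm (atom_coeffs N E k x)) = tvnorm N k"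
    and "\<And>F B. F \<in> borel_measurable borel \<Longrightarrow> (\<And>x. norm (F x) \<le> B) \<Longrightarrow>
           (\<integral>x. F x * k x \<partial>N) = (\<Sum>\<^sub>\<infinity>x\<in>E. F x * atom_coeffs N E k x)"
proof -
  have sets_N: "sets N = sets borel" and finite_N: "finite_measure N" and k: "integrable N k"
    and vanish: "AE x in N. x \<notin> E \<longrightarrow> k x = 0"
    using assms(1) by (auto simp: Mb_def bcm_def supp_in_def)
  interpret countable_atoms N E by (rule countable_atoms.intro[OF sets_N finite_N assms(2)])
  have "k \<in> borel_measurable N" using k by auto
  then have [measurable]: "k \<in> borel_measurable borel"
    by (simp add: measurable_cong_sets[OF sets_N refl])
  have norm_c: "norm (atom_coeffs N E k x) = norm (atom_weight N E x *\<^sub>R norm (k x))" for x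
    using atom_weight_nonneg[of N E x] by (simp add: atom_coeffs_def norm_mult)
  have norm_k: "integrable N (\<lambda>x. norm (k x))" "AE x in N. x \<notin> E \<longrightarrow> norm (k x) = 0"
    using k vanish by auto
  show "x \<notin> E \<Longrightarrow> atom_coeffs N E k x = 0" for x by (simp add: atom_coeffs_def atom_weight_def)
  show "(\<lambda>x. norm (atom_coeffs N E k x)) summable_on E"
    unfolding norm_c by (rule integral_eq_infsum_atoms(1)[OF _ norm_k]) measurable
  have "tvnorm N k = (\<Sum>\<^sub>\<infinity>x\<in>E. atom_weight N E x *\<^sub>R norm (k x))"
    unfolding tvnorm_def by (rule integral_eq_infsum_atoms(2)[OF _ norm_k]) measurable
  then show "(\<Sum>\<^sub>\<infinity>x\<in>E. norm (atom_coeffs N E k x)) = tvnorm N k"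
    using atom_weight_nonneg[of N E] by (simp add: norm_c)
  fix F :: "'a \<Rightarrow> complex" and B
  assume [measurable]: "F \<in> borel_measurable borel" and F: "\<And>x. norm (F x) \<le> B"
  have "integrable N (\<lambda>x. k x * F x)"
    by (rule integrable_mult_bounded[OF k _ F]) (simp add: measurable_cong_sets[OF sets_N refl])
  then have "integrable N (\<lambda>x. F x * k x)" by (simp add: mult.commute)
  moreover have "AE x in N. x \<notin> E \<longrightarrow> F x * k x = 0"
    using vanish by eventually_elim simp
  ultimately have "(\<integral>x. F x * k x \<partial>N) = (\<Sum>\<^sub>\<infinity>x\<in>E. atom_weight N E x *\<^sub>R (F x * k x))"
    by (intro integral_eq_infsum_atoms(2)) measurable
  then show "(\<integral>x. F x * k x \<partial>N) = (\<Sum>\<^sub>\<infinity>x\<in>E. F x * atom_coeffs N E k x)"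
    by (simp add: atom_coeffs_def scaleR_conv_of_real mult.left_commute)
qed


section \<open>Test functions and characters\<close>

lemma test_fun_continuous:
  assumes "test_fun \<psi>"
  shows "continuous_on UNIV \<psi>"
proof -
  have "\<forall>vs. set vs \<subseteq> Basis \<longrightarrow> continuous_on UNIV (foldr dpart vs \<psi>)"
    using assms unfolding test_fun_def smooth_fun_def by blast
  then have "continuous_on UNIV (foldr dpart [] \<psi>)"
    by (metis empty_subsetI list.set(1))
  then show ?thesis by simp
qed

lemma test_fun_vanishes: "x \<notin> tsupport \<psi> \<Longrightarrow> \<psi> x = 0"
  using closure_subset[of "{x. \<psi> x \<noteq> 0}"] unfolding tsupport_def by auto

lemma test_fun_bounded:
  assumes "test_fun \<psi>"
  obtains B where "\<And>x. norm (\<psi> x) \<le> B"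
proof -
  have "bounded (\<psi> ` tsupport \<psi>)"
    using assms by (intro compact_imp_bounded compact_continuous_image
        continuous_on_subset[OF test_fun_continuous[OF assms]]) (auto simp: test_fun_def)
  then obtain B where B: "\<And>x. x \<in> tsupport \<psi> \<Longrightarrow> norm (\<psi> x) \<le> B"
    unfolding bounded_iff by blast
  show ?thesis
  proof
    fix x show "norm (\<psi> x) \<le> max B 0"
      using B[of x] test_fun_vanishes[of x \<psi>] by (cases "x \<in> tsupport \<psi>") auto
  qed
qed

lemma test_fun_integrable:
  assumes "test_fun \<psi>"
  shows "integrable lborel \<psi>"
proof -
  have "integrable lborel (\<lambda>x. indicator (tsupport \<psi>) x *\<^sub>R \<psi> x)"
    using assms by (intro borel_integrable_compact continuous_on_subset[OF test_fun_continuous])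
      (auto simp: test_fun_def)
  also have "(\<lambda>x. indicator (tsupport \<psi>) x *\<^sub>R \<psi> x) = \<psi>"
    using test_fun_vanishes by (auto simp: fun_eq_iff indicator_def)
  finally show ?thesis .
qed

lemma cis_in_Cspec:
  fixes \<Lambda> :: "'a::euclidean_space set"
  assumes "\<gamma> \<in> \<Lambda>"
  shows "(\<lambda>x. cis (2 * pi * (x \<bullet> \<gamma>))) \<in> Cspec \<Lambda>"
  unfolding Cspec_def
proof (intro CollectI conjI)
  show "continuous_on UNIV (\<lambda>x. cis (2 * pi * (x \<bullet> \<gamma>)))" by (intro continuous_intros)
  show "bounded (range (\<lambda>x. cis (2 * pi * (x \<bullet> \<gamma>))))"
    unfolding bounded_iff by (intro exI[of _ 1]) auto
  show "fsupp_in (\<lambda>x. cis (2 * pi * (x \<bullet> \<gamma>))) \<Lambda>"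
    unfolding fsupp_in_def
  proof (intro allI impI, elim conjE)
    fix \<psi> :: "'a \<Rightarrow> complex" assume \<psi>: "test_fun \<psi>" and disjoint: "tsupport \<psi> \<inter> \<Lambda> = {}"
    show "(\<integral>x. cis (2 * pi * (x \<bullet> \<gamma>)) * ft \<psi> x \<partial>lborel) = 0"
    proof (cases "integrable lborel (ft \<psi>)")
      case True
      obtain B where B: "\<And>x. norm (\<psi> x) \<le> B"
        using test_fun_bounded[OF \<psi>] by auto
      have "\<psi> \<gamma> = (\<integral>\<xi>. ft \<psi> \<xi> * cis (2 * pi * (\<gamma> \<bullet> \<xi>)) \<partial>lborel)"
        by (rule fourier_inversion[OF test_fun_integrable[OF \<psi>] test_fun_continuous[OF \<psi>] B True])
      moreover have "\<gamma> \<notin> tsupport \<psi>"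
        using disjoint assms by auto
      then have "\<psi> \<gamma> = 0"
        by (rule test_fun_vanishes)
      ultimately show ?thesis
        by (simp add: inner_commute mult.commute)
    next
      case False
      text \<open>Then the integral is \<open>0\<close> by convention, since \<open>|cis| = 1\<close>.\<close>
      have "\<not> integrable lborel (\<lambda>x. cis (2 * pi * (x \<bullet> \<gamma>)) * ft \<psi> x)"
      proof
        assume "integrable lborel (\<lambda>x. cis (2 * pi * (x \<bullet> \<gamma>)) * ft \<psi> x)"
        then have "integrable lborel (\<lambda>x. cis (2 * pi * (x \<bullet> \<gamma>)) * ft \<psi> x * cis (- (2 * pi * (x \<bullet> \<gamma>))))"
          by (rule integrable_mult_bounded[where B=1]) auto
        also have "(\<lambda>x. cis (2 * pi * (x \<bullet> \<gamma>)) * ft \<psi> x * cis (- (2 * pi * (x \<bullet> \<gamma>)))) = ft \<psi>"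
          by (auto simp: fun_eq_iff cis_mult mult_ac)
        finally show False
          using False by simp
      qed
      then show ?thesis by (rule not_integrable_integral_eq)
    qed
  qed
qed

section \<open>The Dirac measure and the balayage constant\<close>

lemma bcm_dirac: "bcm (return borel y) (\<lambda>_. 1)"
  and tvnorm_dirac: "tvnorm (return borel y) (\<lambda>_. 1) = 1"
proof -
  interpret prob_space "return borel y" by (rule prob_space_return) simp
  show "bcm (return borel y) (\<lambda>_. 1)"
    unfolding bcm_def by (auto simp: finite_measure_axioms)
  show "tvnorm (return borel y) (\<lambda>_. 1) = 1"
    unfolding tvnorm_def by (subst integral_return) auto
qed

lemma ftm_dirac: "ftm (return borel y) (\<lambda>_. 1) \<gamma> = cis (- 2 * pi * (y \<bullet> \<gamma>))"
  unfolding ftm_def by (subst integral_return) auto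

lemma Kbal_nonneg: "0 \<le> Kbal E \<Gamma>"
  unfolding Kbal_def by (rule Inf_greatest) auto

lemma bal_inf_dirac_le_Kbal: "bal_inf E \<Gamma> (return borel y) (\<lambda>_. 1) \<le> Kbal E \<Gamma>"
  unfolding Kbal_def
proof (rule Inf_greatest, clarify)
  fix K assume "\<forall>M g. bcm M g \<longrightarrow> bal_inf E \<Gamma> M g \<le> K * ereal (tvnorm M g)"
  then have "bal_inf E \<Gamma> (return borel y) (\<lambda>_. 1) \<le> K * ereal (tvnorm (return borel y) (\<lambda>_. 1))"
    using bcm_dirac[of y] by blast
  then show "bal_inf E \<Gamma> (return borel y) (\<lambda>_. 1) \<le> K"
    by (simp add: tvnorm_dirac one_ereal_def[symmetric])
qed

text \<open>These are the coefficients \<open>a\<^sub>x(y)\<close> of the paper: \<open>\<Sum>\<^sub>x c x \<delta>\<^sub>x\<close> is a balayage of \<open>\<delta>\<^sub>y\<close>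
  onto \<open>E\<close> for \<open>\<Gamma>\<close>.\<close>

definition balayage_coeffs :: "'a::euclidean_space set \<Rightarrow> 'a set \<Rightarrow> 'a \<Rightarrow> ('a \<Rightarrow> complex) \<Rightarrow> bool" where
  "balayage_coeffs E \<Gamma> y c \<longleftrightarrow> (\<forall>x. x \<notin> E \<longrightarrow> c x = 0) \<and> (\<lambda>x. norm (c x)) summable_on E \<and>
     (\<forall>\<gamma>\<in>\<Gamma>. ft_coeffs c E \<gamma> = cis (- 2 * pi * (y \<bullet> \<gamma>)))"

lemma balayage_coeffs_point_masses:
  "countable E \<Longrightarrow> balayage_coeffs E \<Gamma> y c \<Longrightarrow> point_masses c E"
  by (simp add: balayage_coeffs_def point_masses_def)

lemma balayage_coeffs_near_optimal:
  assumes "countable E" and K: "Kbal E \<Gamma> = ereal K" and "\<delta> > 0"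
  shows "\<exists>c. balayage_coeffs E \<Gamma> y c \<and> (\<Sum>\<^sub>\<infinity>x\<in>E. norm (c x)) < K + \<delta>"
proof -
  have "bal_inf E \<Gamma> (return borel y) (\<lambda>_. 1) < ereal (K + \<delta>)"
    using bal_inf_dirac_le_Kbal[of E \<Gamma> y] K \<open>\<delta> > 0\<close> by (auto intro: le_less_trans)
  then obtain p where p: "p \<in> {(N, k)\<in>Mb E. \<forall>\<gamma>\<in>\<Gamma>. ftm N k \<gamma> = ftm (return borel y) (\<lambda>_. 1) \<gamma>}"
    and lt: "(case p of (N, k) \<Rightarrow> ereal (tvnorm N k)) < ereal (K + \<delta>)"
    unfolding bal_inf_def INF_less_iff by blast
  obtain N k where [simp]: "p = (N, k)" by (cases p)
  have Nk: "(N, k) \<in> Mb E" "\<forall>\<gamma>\<in>\<Gamma>. ftm N k \<gamma> = cis (- 2 * pi * (y \<bullet> \<gamma>))"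
    using p by (simp_all add: ftm_dirac)
  have tv: "tvnorm N k < K + \<delta>"
    using lt by simp
  define c where "c = atom_coeffs N E k"
  note c = Mb_countable_coeffs[OF Nk(1) \<open>countable E\<close>, folded c_def]
  have ft: "ft_coeffs c E \<gamma> = ftm N k \<gamma>" for \<gamma>
  proof -
    have "(\<integral>x. cis (- 2 * pi * (x \<bullet> \<gamma>)) * k x \<partial>N) = (\<Sum>\<^sub>\<infinity>x\<in>E. cis (- 2 * pi * (x \<bullet> \<gamma>)) * c x)"
      by (rule c(4)[where B=1]) simp_all
    then show ?thesis
      unfolding ft_coeffs_def ftm_def by (simp only: mult.commute)
  qed
  have "balayage_coeffs E \<Gamma> y c"
    unfolding balayage_coeffs_def using c(1,2) Nk(2) ft by simp
  moreover have "(\<Sum>\<^sub>\<infinity>x\<in>E. norm (c x)) < K + \<delta>"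
    using c(3) tv by simp
  ultimately show ?thesis by blast
qed


section \<open>Windows\<close>

lemma bounded_range_if_tendsto_at_infinity:
  fixes f :: "'a::euclidean_space \<Rightarrow> 'b::real_normed_vector"
  assumes "continuous_on UNIV f" and "(f \<longlongrightarrow> l) at_infinity"
  shows "bounded (range f)"
proof -
  obtain R where R: "\<And>x. norm x \<ge> R \<Longrightarrow> dist (f x) l < 1"
    using assms(2) unfolding tendsto_iff eventually_at_infinity by (meson zero_less_one)
  have "range f \<subseteq> f ` cball 0 R \<union> ball l 1"
    using R by (force simp: dist_commute not_le)
  moreover have "bounded (f ` cball 0 R)"
    by (intro compact_imp_bounded compact_continuous_image continuous_on_subset[OF assms(1)]) auto
  ultimately show ?thesis
    by (meson bounded_Un bounded_ball bounded_subset)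
qed

lemma tendsto_zero_if_exp_decay:
  fixes h :: "'a::euclidean_space \<Rightarrow> complex" and \<Omega> :: "real \<Rightarrow> real"
  assumes \<Omega>: "filterlim \<Omega> at_top at_top"
    and decay: "\<exists>C R. \<forall>x. norm x \<ge> R \<longrightarrow> cmod (h x) \<le> C * exp (- \<Omega> (norm x))"
  shows "(h \<longlongrightarrow> 0) at_infinity"
proof -
  obtain C R where CR: "\<And>x. norm x \<ge> R \<Longrightarrow> norm (h x) \<le> C * exp (- \<Omega> (norm x))"
    using decay by blast
  have "filterlim (\<lambda>x::'a. - \<Omega> (norm x)) at_bot at_infinity"
    using filterlim_compose[OF \<Omega> filterlim_norm_at_top] by (simp add: filterlim_uminus_at_bot)
  then have "((\<lambda>x::'a. exp (- \<Omega> (norm x))) \<longlongrightarrow> 0) at_infinity"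
    by (rule filterlim_compose[OF exp_at_bot])
  then have "((\<lambda>x::'a. C * exp (- \<Omega> (norm x))) \<longlongrightarrow> 0) at_infinity"
    by (rule tendsto_mult_right_zero)
  moreover have "eventually (\<lambda>x. norm (h x) \<le> C * exp (- \<Omega> (norm x))) at_infinity"
    unfolding eventually_at_infinity using CR by blast
  ultimately show ?thesis
    by (rule Lim_null_comparison[rotated])
qed

locale window =
  fixes h :: "'a::euclidean_space \<Rightarrow> complex" and \<epsilon> :: real
  assumes eps_pos: "\<epsilon> > 0"
    and integrable: "integrable lborel h" and continuous: "continuous_on UNIV h"
    and ft_vanishes: "\<And>\<xi>. norm \<xi> > \<epsilon> \<Longrightarrow> ft h \<xi> = 0"
    and at_0: "h 0 = 1" and tendsto_at_infinity: "(h \<longlongrightarrow> 0) at_infinity"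
begin

lemma borel_measurable_h [measurable]: "h \<in> borel_measurable borel"
  using integrable by auto

lemma borel_measurable_ft_h [measurable]: "ft h \<in> borel_measurable borel"
  unfolding ft_def by measurable

lemma bounded: "\<exists>B. \<forall>x. norm (h x) \<le> B"
  using bounded_range_if_tendsto_at_infinity[OF continuous tendsto_at_infinity]
  unfolding bounded_iff by blast

lemma eventually_small:
  assumes "\<eta> > 0"
  shows "\<exists>R. \<forall>x. norm x \<ge> R \<longrightarrow> norm (h x) \<le> \<eta>"
proof -
  obtain R where "\<forall>x. R \<le> norm x \<longrightarrow> dist (h x) 0 < \<eta>"
    using tendsto_at_infinity assms unfolding tendsto_iff eventually_at_infinity by blast
  then show ?thesis by (auto intro: less_imp_le)
qed

lemma integrable_ft_h: "integrable lborel (ft h)"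
proof (rule Bochner_Integration.integrable_bound)
  define L where "L = (\<integral>x. norm (h x) \<partial>lborel)"
  show "integrable lborel (\<lambda>\<xi>::'a. L * indicator (cball 0 \<epsilon>) \<xi>)"
    using emeasure_bounded_finite[OF bounded_cball[of "0::'a" \<epsilon>]]
    by (intro integrable_mult_right) (simp add: integrable_indicator_iff top.not_eq_extremum)
  have "L \<ge> 0" unfolding L_def by (rule integral_nonneg_AE) auto
  moreover have "norm (ft h \<xi>) \<le> L" for \<xi>
    unfolding ft_def L_def using integral_norm_bound[of lborel "\<lambda>x. h x * cis (- 2 * pi * (x \<bullet> \<xi>))"]
    by (simp add: norm_mult)
  ultimately show "AE \<xi> in lborel. norm (ft h \<xi>) \<le> norm (L * indicator (cball 0 \<epsilon>) \<xi>)"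
    using ft_vanishes by (intro AE_I2) (auto simp: indicator_def)
qed simp

lemma inversion: "h z = (\<integral>\<xi>. ft h \<xi> * cis (2 * pi * (z \<bullet> \<xi>)) \<partial>lborel)"
  using bounded fourier_inversion[OF integrable continuous _ integrable_ft_h] by blast

lemma cis_phase_split:
  fixes x w \<xi> \<gamma> :: 'a
  shows "cis (2 * pi * ((s *\<^sub>R (x - w)) \<bullet> \<xi>)) * cis (- 2 * pi * (x \<bullet> \<gamma>))
    = cis (- 2 * pi * s * (w \<bullet> \<xi>)) * cis (- 2 * pi * (x \<bullet> (\<gamma> - s *\<^sub>R \<xi>)))"
proof -
  have "2 * pi * ((s *\<^sub>R (x - w)) \<bullet> \<xi>) + - 2 * pi * (x \<bullet> \<gamma>)
      = - 2 * pi * s * (w \<bullet> \<xi>) + - 2 * pi * (x \<bullet> (\<gamma> - s *\<^sub>R \<xi>))"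
    by (simp add: inner_diff_left inner_diff_right algebra_simps)
  then show ?thesis by (simp add: cis_mult)
qed

lemma modulated_window_inversion:
  "h (s *\<^sub>R (x - w)) * cis (- 2 * pi * (x \<bullet> \<gamma>))
    = (\<integral>\<xi>. ft h \<xi> * cis (- 2 * pi * s * (w \<bullet> \<xi>)) * cis (- 2 * pi * (x \<bullet> (\<gamma> - s *\<^sub>R \<xi>))) \<partial>lborel)"
proof -
  have "h (s *\<^sub>R (x - w)) * cis (- 2 * pi * (x \<bullet> \<gamma>))
      = (\<integral>\<xi>. ft h \<xi> * cis (2 * pi * ((s *\<^sub>R (x - w)) \<bullet> \<xi>)) * cis (- 2 * pi * (x \<bullet> \<gamma>)) \<partial>lborel)"
    by (subst inversion) simp
  also have "\<dots> = (\<integral>\<xi>. ft h \<xi> * cis (- 2 * pi * s * (w \<bullet> \<xi>)) * cis (- 2 * pi * (x \<bullet> (\<gamma> - s *\<^sub>R \<xi>))) \<partial>lborel)"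
    by (intro Bochner_Integration.integral_cong refl) (metis cis_phase_split mult.assoc)
  finally show ?thesis .
qed

text \<open>Fourier inversion of \<open>h\<close> and Fubini: integrating a modulated, dilated translate of \<open>h\<close>
  against a measure only sees that measure's Fourier transform on \<open>\<gamma> - s \<cdot> B(0, \<epsilon>)\<close>.\<close>

lemma integral_window_eq_ftm:
  assumes "bcm N k"
  shows "(\<integral>x. h (s *\<^sub>R (x - w)) * cis (- 2 * pi * (x \<bullet> \<gamma>)) * k x \<partial>N)
       = (\<integral>\<xi>. ft h \<xi> * cis (- 2 * pi * s * (w \<bullet> \<xi>)) * ftm N k (\<gamma> - s *\<^sub>R \<xi>) \<partial>lborel)"
proof -
  have sets_N: "sets N = sets borel" and "finite_measure N" and k: "integrable N k"
    using assms by (auto simp: bcm_def)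
  interpret N: finite_measure N by fact
  interpret P: pair_sigma_finite N lborel ..
  have [measurable]: "k \<in> borel_measurable N" using k by auto
  define Q where "Q x \<xi> = ft h \<xi> * cis (- 2 * pi * s * (w \<bullet> \<xi>)) * (k x * cis (- 2 * pi * (x \<bullet> (\<gamma> - s *\<^sub>R \<xi>))))"
    for x \<xi>
  have Q_measurable: "(\<lambda>(x, \<xi>). Q x \<xi>) \<in> borel_measurable (N \<Otimes>\<^sub>M lborel)"
  proof -
    have "fst \<in> measurable (N \<Otimes>\<^sub>M lborel) N" by (rule measurable_fst)
    then have [measurable]: "fst \<in> measurable (N \<Otimes>\<^sub>M lborel) borel"
      by (simp add: measurable_cong_sets[OF refl sets_N])
    have "(\<lambda>p::'a\<times>'a. k (fst p)) \<in> borel_measurable (N \<Otimes>\<^sub>M lborel)" by measurable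
    then show ?thesis unfolding Q_def by (simp add: case_prod_beta) measurable
  qed
  have Q_integrable: "integrable (N \<Otimes>\<^sub>M lborel) (\<lambda>(x, \<xi>). Q x \<xi>)"
  proof (rule P.Fubini_integrable[OF Q_measurable])
    have "norm (Q x \<xi>) = norm (ft h \<xi>) * norm (k x)" for x \<xi> by (simp add: Q_def norm_mult)
    then show "integrable N (\<lambda>x. \<integral>\<xi>. norm (case (x, \<xi>) of (x, \<xi>) \<Rightarrow> Q x \<xi>) \<partial>lborel)"
      using k by simp
    have "integrable lborel (\<lambda>\<xi>. ft h \<xi> * (cis (- 2 * pi * s * (w \<bullet> \<xi>)) * (k x * cis (- 2 * pi * (x \<bullet> (\<gamma> - s *\<^sub>R \<xi>))))))" for x
      by (rule integrable_mult_bounded[where B="norm (k x)"]) (auto simp: integrable_ft_h norm_mult)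
    then show "AE x in N. integrable lborel (\<lambda>\<xi>. case (x, \<xi>) of (x, \<xi>) \<Rightarrow> Q x \<xi>)"
      by (simp add: Q_def mult_ac)
  qed
  have "(\<integral>x. h (s *\<^sub>R (x - w)) * cis (- 2 * pi * (x \<bullet> \<gamma>)) * k x \<partial>N) = (\<integral>x. (\<integral>\<xi>. Q x \<xi> \<partial>lborel) \<partial>N)"
  proof (intro Bochner_Integration.integral_cong refl)
    fix x
    have "h (s *\<^sub>R (x - w)) * cis (- 2 * pi * (x \<bullet> \<gamma>)) * k x
        = (\<integral>\<xi>. ft h \<xi> * cis (- 2 * pi * s * (w \<bullet> \<xi>)) * cis (- 2 * pi * (x \<bullet> (\<gamma> - s *\<^sub>R \<xi>))) \<partial>lborel) * k x"
      by (simp only: modulated_window_inversion)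
    also have "\<dots> = (\<integral>\<xi>. Q x \<xi> \<partial>lborel)"
      by (simp add: Q_def mult_ac)
    finally show "h (s *\<^sub>R (x - w)) * cis (- 2 * pi * (x \<bullet> \<gamma>)) * k x = (\<integral>\<xi>. Q x \<xi> \<partial>lborel)" .
  qed
  also have "\<dots> = (\<integral>\<xi>. (\<integral>x. Q x \<xi> \<partial>N) \<partial>lborel)"
    by (rule P.Fubini_integral[OF Q_integrable, symmetric])
  also have "\<dots> = (\<integral>\<xi>. ft h \<xi> * cis (- 2 * pi * s * (w \<bullet> \<xi>)) * ftm N k (\<gamma> - s *\<^sub>R \<xi>) \<partial>lborel)"
    unfolding Q_def ftm_def by simp
  finally show ?thesis .
qed

lemma integral_window_eq_dirac:
  assumes "bcm N k"
    and ftm: "\<And>\<xi>. norm \<xi> \<le> \<epsilon> \<Longrightarrow> ftm N k (\<gamma> - s *\<^sub>R \<xi>) = cis (- 2 * pi * (y \<bullet> (\<gamma> - s *\<^sub>R \<xi>)))"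
  shows "(\<integral>x. h (s *\<^sub>R (x - w)) * cis (- 2 * pi * (x \<bullet> \<gamma>)) * k x \<partial>N)
       = h (s *\<^sub>R (y - w)) * cis (- 2 * pi * (y \<bullet> \<gamma>))"
proof -
  have "(\<integral>x. h (s *\<^sub>R (x - w)) * cis (- 2 * pi * (x \<bullet> \<gamma>)) * k x \<partial>N)
      = (\<integral>\<xi>. ft h \<xi> * cis (- 2 * pi * s * (w \<bullet> \<xi>)) * ftm N k (\<gamma> - s *\<^sub>R \<xi>) \<partial>lborel)"
    by (rule integral_window_eq_ftm[OF assms(1)])
  also have "\<dots> = (\<integral>\<xi>. ft h \<xi> * cis (- 2 * pi * s * (w \<bullet> \<xi>)) * ftm (return borel y) (\<lambda>_. 1) (\<gamma> - s *\<^sub>R \<xi>) \<partial>lborel)"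
  proof (intro Bochner_Integration.integral_cong refl)
    fix \<xi> :: 'a
    show "ft h \<xi> * cis (- 2 * pi * s * (w \<bullet> \<xi>)) * ftm N k (\<gamma> - s *\<^sub>R \<xi>)
        = ft h \<xi> * cis (- 2 * pi * s * (w \<bullet> \<xi>)) * ftm (return borel y) (\<lambda>_. 1) (\<gamma> - s *\<^sub>R \<xi>)"
      using ftm[of \<xi>] ft_vanishes[of \<xi>] by (cases "norm \<xi> \<le> \<epsilon>") (simp_all add: ftm_dirac)
  qed
  also have "\<dots> = (\<integral>x. h (s *\<^sub>R (x - w)) * cis (- 2 * pi * (x \<bullet> \<gamma>)) * 1 \<partial>return borel y)"
    by (rule integral_window_eq_ftm[OF bcm_dirac, symmetric])
  also have "\<dots> = h (s *\<^sub>R (y - w)) * cis (- 2 * pi * (y \<bullet> \<gamma>))"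
    by (subst integral_return) auto
  finally show ?thesis .
qed

lemma infsum_window_eq_dirac:
  assumes "point_masses c S"
    and ft: "\<And>\<xi>. norm \<xi> \<le> \<epsilon> \<Longrightarrow> ft_coeffs c S (\<gamma> - s *\<^sub>R \<xi>) = cis (- 2 * pi * (y \<bullet> (\<gamma> - s *\<^sub>R \<xi>)))"
  shows "(\<Sum>\<^sub>\<infinity>x\<in>S. h (s *\<^sub>R (x - w)) * cis (- 2 * pi * (x \<bullet> \<gamma>)) * c x)
       = h (s *\<^sub>R (y - w)) * cis (- 2 * pi * (y \<bullet> \<gamma>))"
proof -
  interpret point_masses c S by fact
  obtain B where B: "\<And>x. norm (h x) \<le> B" using bounded by blast
  have "(\<Sum>\<^sub>\<infinity>x\<in>S. h (s *\<^sub>R (x - w)) * cis (- 2 * pi * (x \<bullet> \<gamma>)) * c x)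
      = (\<integral>x. h (s *\<^sub>R (x - w)) * cis (- 2 * pi * (x \<bullet> \<gamma>)) * point_mass_phase c x \<partial>point_mass_measure c)"
    by (rule integral_point_masses(2)[symmetric, where C=B]) (auto simp: norm_mult B)
  also have "\<dots> = h (s *\<^sub>R (y - w)) * cis (- 2 * pi * (y \<bullet> \<gamma>))"
    by (rule integral_window_eq_dirac[OF bcm_point_masses]) (simp add: ftm_point_masses ft)
  finally show ?thesis .
qed

end


section \<open>Optimal balayage coefficients and reconstruction\<close>

lemma tendsto_ft_coeffs:
  assumes "\<And>x. x \<notin> S \<Longrightarrow> c x = 0" and "(\<lambda>x. norm (c x)) summable_on S" and "g \<longlonglongrightarrow> \<gamma>"
  shows "(\<lambda>j. ft_coeffs c S (g j)) \<longlonglongrightarrow> ft_coeffs c S \<gamma>"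
proof -
  have "(\<lambda>j. \<Sum>\<^sub>\<infinity>x\<in>S. cis (- 2 * pi * (x \<bullet> g j)) * c x) \<longlonglongrightarrow> (\<Sum>\<^sub>\<infinity>x\<in>S. cis (- 2 * pi * (x \<bullet> \<gamma>)) * c x)"
    by (rule tendsto_infsum_dominated[OF assms(1,2), where B=1]) (auto intro!: tendsto_intros assms(3))
  then show ?thesis
    unfolding ft_coeffs_def by (simp only: mult.commute)
qed

lemma nbhd_approx_infdist_less:
  fixes \<Lambda> :: "'a::euclidean_space set"
  assumes "closed \<Lambda>" and "\<epsilon> > 0" and "\<gamma> \<in> nbhd \<Lambda> \<epsilon>"
  shows "\<exists>g. g \<longlonglongrightarrow> \<gamma> \<and> (\<forall>j. infdist (g j) \<Lambda> < \<epsilon>)"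
proof (cases "infdist \<gamma> \<Lambda> < \<epsilon>")
  case True
  then show ?thesis by (intro exI[of _ "\<lambda>_. \<gamma>"]) auto
next
  case False
  then have eq: "infdist \<gamma> \<Lambda> = \<epsilon>" using assms(3) by (simp add: nbhd_def)
  then have "\<Lambda> \<noteq> {}" using \<open>\<epsilon> > 0\<close> by (auto simp: infdist_def)
  then obtain p where p: "p \<in> \<Lambda>" "infdist \<gamma> \<Lambda> = dist \<gamma> p"
    using infdist_attains_inf[OF assms(1)] by blast
  define g where "g j = \<gamma> + (1 / (real j + 2)) *\<^sub>R (p - \<gamma>)" for j :: nat
  have "(\<lambda>j. 1 / (real j + 2)) \<longlonglongrightarrow> 0"
    using LIMSEQ_Suc[OF LIMSEQ_inverse_real_of_nat] by (simp add: inverse_eq_divide add.commute)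
  then have "g \<longlonglongrightarrow> \<gamma> + 0 *\<^sub>R (p - \<gamma>)"
    unfolding g_def by (intro tendsto_intros)
  moreover have "infdist (g j) \<Lambda> < \<epsilon>" for j
  proof -
    have "g j - p = (1 - 1 / (real j + 2)) *\<^sub>R (\<gamma> - p)"
      by (simp add: g_def algebra_simps)
    then have "dist (g j) p = (1 - 1 / (real j + 2)) * dist \<gamma> p"
      by (simp add: dist_norm)
    also have "\<dots> < dist \<gamma> p" using eq p(2) \<open>\<epsilon> > 0\<close> by (simp add: field_simps)
    finally show ?thesis
      using infdist_le[OF p(1), of "g j"] eq p(2) by simp
  qed
  ultimately show ?thesis by auto
qed

lemma ft_coeffs_eq_on_nbhd:
  fixes \<Lambda> :: "'a::euclidean_space set"
  assumes "\<And>x. x \<notin> S \<Longrightarrow> c x = 0" and "(\<lambda>x. norm (c x)) summable_on S"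
    and "closed \<Lambda>" and "\<epsilon> > 0"
    and interior: "\<And>\<gamma>. infdist \<gamma> \<Lambda> < \<epsilon> \<Longrightarrow> ft_coeffs c S \<gamma> = cis (- 2 * pi * (y \<bullet> \<gamma>))"
    and "\<gamma> \<in> nbhd \<Lambda> \<epsilon>"
  shows "ft_coeffs c S \<gamma> = cis (- 2 * pi * (y \<bullet> \<gamma>))"
proof -
  obtain g where g: "g \<longlonglongrightarrow> \<gamma>" "\<And>j. infdist (g j) \<Lambda> < \<epsilon>"
    using nbhd_approx_infdist_less[OF assms(3,4,6)] by blast
  have "(\<lambda>j. ft_coeffs c S (g j)) \<longlonglongrightarrow> ft_coeffs c S \<gamma>"
    by (rule tendsto_ft_coeffs[OF assms(1,2) g(1)])
  moreover have "(\<lambda>j. ft_coeffs c S (g j)) \<longlonglongrightarrow> cis (- 2 * pi * (y \<bullet> \<gamma>))"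
    unfolding interior[OF g(2)] by (intro tendsto_intros g(1))
  ultimately show ?thesis
    by (rule LIMSEQ_unique)
qed

lemma has_sum_minus_dirac:
  fixes c F :: "'a \<Rightarrow> complex"
  assumes vanish: "\<And>x. x \<notin> E \<Longrightarrow> c x = 0" and summable: "(\<lambda>x. F x * c x) summable_on E"
  shows "((\<lambda>x. F x * (c x - (if x = y then 1 else 0))) has_sum (\<Sum>\<^sub>\<infinity>x\<in>E. F x * c x) - F y) (insert y E)"
proof -
  have "((\<lambda>x. F x * c x) has_sum (\<Sum>\<^sub>\<infinity>x\<in>E. F x * c x)) (insert y E)
      \<longleftrightarrow> ((\<lambda>x. F x * c x) has_sum (\<Sum>\<^sub>\<infinity>x\<in>E. F x * c x)) E"
    by (rule has_sum_cong_neutral) (auto simp: vanish)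
  then have "((\<lambda>x. F x * c x) has_sum (\<Sum>\<^sub>\<infinity>x\<in>E. F x * c x)) (insert y E)"
    using has_sum_infsum[OF summable] by simp
  moreover have "((\<lambda>x. F x * (if x = y then 1 else 0)) has_sum F y) (insert y E)
      \<longleftrightarrow> ((\<lambda>x. F x * (if x = y then 1 else 0)) has_sum F y) {y}"
    by (rule has_sum_cong_neutral) auto
  then have "((\<lambda>x. - (F x * (if x = y then 1 else 0))) has_sum - F y) (insert y E)"
    using has_sum_finite[of "{y}" "\<lambda>x. F x * (if x = y then 1 else 0)"] by (simp add: has_sum_uminus)
  ultimately show ?thesis
    using has_sum_add by (fastforce simp: right_diff_distrib)
qed

lemma point_masses_mult_bounded:
  assumes "point_masses c S" and "\<And>x. norm (F x) \<le> B"
  shows "point_masses (\<lambda>x. F x * c x) S"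
proof -
  interpret point_masses c S by fact
  show ?thesis
    using countable vanish abs_summable_on_mult_bounded[OF summable assms(2)] by unfold_locales auto
qed

lemma point_masses_minus_dirac:
  assumes "point_masses c E"
  shows "point_masses (\<lambda>x. c x - (if x = y then 1 else 0)) (insert y E)"
proof -
  interpret point_masses c E by fact
  have "(\<lambda>x. norm (c x)) summable_on insert y E"
    using summable by (simp add: summable_on_insert_iff)
  moreover have "(\<lambda>x. norm (if x = y then 1 else 0 :: complex)) summable_on insert y E
      \<longleftrightarrow> (\<lambda>x. norm (if x = y then 1 else 0 :: complex)) summable_on {y}"
    by (rule summable_on_cong_neutral) auto
  then have "(\<lambda>x. norm (if x = y then 1 else 0 :: complex)) summable_on insert y E"
    by simp
  ultimately have "(\<lambda>x. norm (c x - (if x = y then 1 else 0))) summable_on insert y E"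
    by (rule summable_on_comparison_test[OF summable_on_add]) (auto intro: order_trans[OF norm_triangle_ineq4])
  then show ?thesis
    using countable vanish by unfold_locales auto
qed

context window
begin

lemma finite_window_gt:
  assumes "separated E" and "s > 0" and "\<eta> > 0"
  shows "finite {x\<in>E. norm (h (s *\<^sub>R x)) > \<eta>}"
proof -
  obtain R where R: "\<And>x. norm x \<ge> R \<Longrightarrow> norm (h x) \<le> \<eta>"
    using eventually_small[OF \<open>\<eta> > 0\<close>] by blast
  have "norm x \<le> R / s" if "norm (h (s *\<^sub>R x)) > \<eta>" for x
  proof (rule ccontr)
    assume "\<not> norm x \<le> R / s"
    then have "R \<le> norm (s *\<^sub>R x)" using \<open>s > 0\<close> by (simp add: field_simps)
    then show False using R that by fastforce
  qed
  then have "{x\<in>E. norm (h (s *\<^sub>R x)) > \<eta>} \<subseteq> E \<inter> cball 0 (R / s)"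
    by auto
  then show ?thesis
    by (rule finite_subset) (rule separated_imp_finite_Int_bounded[OF assms(1) bounded_cball])
qed

text \<open>The identity tested against the window \<open>h (s x) e\<^sup>-\<^sup>2\<^sup>\<pi>\<^sup>i\<^sup>x\<^sup>\<gamma>\<close> survives the pointwise limit,
  because on a separated set this window vanishes at infinity.\<close>

lemma infsum_window_limit:
  assumes E: "separated E"
    and summable_n: "\<And>n. (\<lambda>x. norm (cn n x)) summable_on E" and bound_n: "\<And>n. (\<Sum>\<^sub>\<infinity>x\<in>E. norm (cn n x)) \<le> K"
    and summable: "(\<lambda>x. norm (c x)) summable_on E" and bound: "(\<Sum>\<^sub>\<infinity>x\<in>E. norm (c x)) \<le> K"
    and lim: "\<And>x. x \<in> E \<Longrightarrow> (\<lambda>n. cn n x) \<longlonglongrightarrow> c x"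
    and "s > 0"
    and window_n: "\<And>n. (\<Sum>\<^sub>\<infinity>x\<in>E. h (s *\<^sub>R x) * cis (- 2 * pi * (x \<bullet> \<gamma>)) * cn n x) = z"
  shows "(\<Sum>\<^sub>\<infinity>x\<in>E. h (s *\<^sub>R x) * cis (- 2 * pi * (x \<bullet> \<gamma>)) * c x) = z"
proof -
  obtain B where B: "\<And>x. norm (h x) \<le> B" using bounded by blast
  have "(\<lambda>n. \<Sum>\<^sub>\<infinity>x\<in>E. h (s *\<^sub>R x) * cis (- 2 * pi * (x \<bullet> \<gamma>)) * cn n x)
      \<longlonglongrightarrow> (\<Sum>\<^sub>\<infinity>x\<in>E. h (s *\<^sub>R x) * cis (- 2 * pi * (x \<bullet> \<gamma>)) * c x)"
  proof (rule tendsto_infsum_c0[OF summable_n bound_n summable bound lim])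
    show "norm (h (s *\<^sub>R x) * cis (- 2 * pi * (x \<bullet> \<gamma>))) \<le> B" for x
      by (simp add: norm_mult B)
    show "finite {x\<in>E. norm (h (s *\<^sub>R x) * cis (- 2 * pi * (x \<bullet> \<gamma>))) > \<eta>}" if "\<eta> > 0" for \<eta>
      using finite_window_gt[OF E \<open>s > 0\<close> that] by (simp add: norm_mult)
  qed
  then have "(\<lambda>n. z) \<longlonglongrightarrow> (\<Sum>\<^sub>\<infinity>x\<in>E. h (s *\<^sub>R x) * cis (- 2 * pi * (x \<bullet> \<gamma>)) * c x)"
    by (simp only: window_n)
  then show ?thesis
    by (simp add: LIMSEQ_const_iff)
qed

lemma infsum_scaled_window_eq_dirac:
  fixes \<Lambda> :: "'a set"
  assumes "countable E" and bal: "balayage_coeffs E (nbhd \<Lambda> \<epsilon>) y c"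
    and "0 < s" and s: "s * \<epsilon> \<le> \<epsilon> - infdist \<gamma> \<Lambda>"
  shows "(\<Sum>\<^sub>\<infinity>x\<in>E. h (s *\<^sub>R x) * cis (- 2 * pi * (x \<bullet> \<gamma>)) * c x) = h (s *\<^sub>R y) * cis (- 2 * pi * (y \<bullet> \<gamma>))"
proof -
  have "(\<Sum>\<^sub>\<infinity>x\<in>E. h (s *\<^sub>R (x - 0)) * cis (- 2 * pi * (x \<bullet> \<gamma>)) * c x)
      = h (s *\<^sub>R (y - 0)) * cis (- 2 * pi * (y \<bullet> \<gamma>))"
  proof (rule infsum_window_eq_dirac[OF balayage_coeffs_point_masses[OF assms(1) bal]])
    fix \<xi> :: 'a assume \<xi>: "norm \<xi> \<le> \<epsilon>"
    have "infdist (\<gamma> - s *\<^sub>R \<xi>) \<Lambda> \<le> infdist \<gamma> \<Lambda> + dist (\<gamma> - s *\<^sub>R \<xi>) \<gamma>"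
      by (rule infdist_triangle)
    also have "dist (\<gamma> - s *\<^sub>R \<xi>) \<gamma> = s * norm \<xi>" using \<open>0 < s\<close> by (simp add: dist_norm)
    also have "s * norm \<xi> \<le> s * \<epsilon>" using \<open>0 < s\<close> \<xi> by simp
    finally have "\<gamma> - s *\<^sub>R \<xi> \<in> nbhd \<Lambda> \<epsilon>" using s by (simp add: nbhd_def)
    then show "ft_coeffs c E (\<gamma> - s *\<^sub>R \<xi>) = cis (- 2 * pi * (y \<bullet> (\<gamma> - s *\<^sub>R \<xi>)))"
      using bal by (simp add: balayage_coeffs_def)
  qed
  then show ?thesis by simp
qed

text \<open>Letting the dilation \<open>s\<close> go to \<open>0\<close> removes the window, since \<open>h (s x) \<rightarrow> h 0 = 1\<close>.\<close>

lemma ft_coeffs_eq_if_scaled_window_eq: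
  assumes vanish: "\<And>x. x \<notin> E \<Longrightarrow> c x = 0" and summable: "(\<lambda>x. norm (c x)) summable_on E"
    and "\<rho> > 0"
    and scaled: "\<And>s. 0 < s \<Longrightarrow> s \<le> \<rho> \<Longrightarrow>
      (\<Sum>\<^sub>\<infinity>x\<in>E. h (s *\<^sub>R x) * cis (- 2 * pi * (x \<bullet> \<gamma>)) * c x) = h (s *\<^sub>R y) * cis (- 2 * pi * (y \<bullet> \<gamma>))"
  shows "ft_coeffs c E \<gamma> = cis (- 2 * pi * (y \<bullet> \<gamma>))"
proof -
  obtain B where B: "\<And>x. norm (h x) \<le> B" using bounded by blast
  define s where "s m = \<rho> / (real m + 1)" for m :: nat
  have s: "0 < s m" "s m \<le> \<rho>" for m using \<open>\<rho> > 0\<close> by (auto simp: s_def field_simps)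
  have "(\<lambda>m. \<rho> / (1 + real m)) \<longlonglongrightarrow> 0"
    using tendsto_mult[OF tendsto_const[of \<rho>] LIMSEQ_inverse_real_of_nat]
    by (simp add: inverse_eq_divide)
  then have "s \<longlonglongrightarrow> 0"
    unfolding s_def by (simp add: add.commute)
  then have "(\<lambda>m. s m *\<^sub>R x) \<longlonglongrightarrow> 0 *\<^sub>R x" for x :: 'a
    by (intro tendsto_intros)
  then have h_lim: "(\<lambda>m. h (s m *\<^sub>R x)) \<longlonglongrightarrow> 1" for x :: 'a
    using continuous_on_tendsto_compose[OF continuous] at_0 by fastforce
  have window_lim: "(\<lambda>m. h (s m *\<^sub>R x) * z) \<longlonglongrightarrow> z" for x :: 'a and z
    using tendsto_mult[OF h_lim tendsto_const, of x z] by simp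
  have "(\<lambda>m. \<Sum>\<^sub>\<infinity>x\<in>E. h (s m *\<^sub>R x) * cis (- 2 * pi * (x \<bullet> \<gamma>)) * c x)
      \<longlonglongrightarrow> (\<Sum>\<^sub>\<infinity>x\<in>E. cis (- 2 * pi * (x \<bullet> \<gamma>)) * c x)"
    by (rule tendsto_infsum_dominated[OF vanish summable, where B=B]) (auto simp: norm_mult B window_lim)
  then have "(\<lambda>m. h (s m *\<^sub>R y) * cis (- 2 * pi * (y \<bullet> \<gamma>)))
      \<longlonglongrightarrow> (\<Sum>\<^sub>\<infinity>x\<in>E. cis (- 2 * pi * (x \<bullet> \<gamma>)) * c x)"
    by (simp only: scaled[OF s])
  from LIMSEQ_unique[OF this window_lim]
  show ?thesis
    unfolding ft_coeffs_def by (simp only: mult.commute)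
qed

lemma ft_coeffs_limit_interior:
  fixes \<Lambda> :: "'a set"
  assumes E: "separated E"
    and bal_n: "\<And>n. balayage_coeffs E (nbhd \<Lambda> \<epsilon>) y (cn n)"
    and bound_n: "\<And>n. (\<Sum>\<^sub>\<infinity>x\<in>E. norm (cn n x)) \<le> K"
    and vanish: "\<And>x. x \<notin> E \<Longrightarrow> c x = 0"
    and summable: "(\<lambda>x. norm (c x)) summable_on E" and bound: "(\<Sum>\<^sub>\<infinity>x\<in>E. norm (c x)) \<le> K"
    and lim: "\<And>x. x \<in> E \<Longrightarrow> (\<lambda>n. cn n x) \<longlonglongrightarrow> c x"
    and \<gamma>: "infdist \<gamma> \<Lambda> < \<epsilon>"
  shows "ft_coeffs c E \<gamma> = cis (- 2 * pi * (y \<bullet> \<gamma>))"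
proof (rule ft_coeffs_eq_if_scaled_window_eq[OF vanish summable])
  show "(\<epsilon> - infdist \<gamma> \<Lambda>) / \<epsilon> > 0" using \<gamma> eps_pos by simp
  fix s assume s: "0 < s" "s \<le> (\<epsilon> - infdist \<gamma> \<Lambda>) / \<epsilon>"
  then have "s * \<epsilon> \<le> \<epsilon> - infdist \<gamma> \<Lambda>" using eps_pos by (simp add: field_simps)
  note scaled_n = infsum_scaled_window_eq_dirac[OF separated_imp_countable[OF E] bal_n \<open>0 < s\<close> this]
  show "(\<Sum>\<^sub>\<infinity>x\<in>E. h (s *\<^sub>R x) * cis (- 2 * pi * (x \<bullet> \<gamma>)) * c x) = h (s *\<^sub>R y) * cis (- 2 * pi * (y \<bullet> \<gamma>))"
    by (rule infsum_window_limit[OF E _ bound_n summable bound lim \<open>0 < s\<close> scaled_n])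
      (use bal_n in \<open>simp add: balayage_coeffs_def\<close>)
qed

text \<open>Near-optimal balayages of \<open>\<delta>\<^sub>y\<close> are bounded in \<open>\<ell>\<^sup>1(E)\<close>; a pointwise limit of a
  subsequence is an optimal one.\<close>

lemma balayage_coeffs_optimal:
  fixes \<Lambda> :: "'a set"
  assumes E: "separated E" and "closed \<Lambda>" and K: "Kbal E (nbhd \<Lambda> \<epsilon>) = ereal K"
  shows "\<exists>c. balayage_coeffs E (nbhd \<Lambda> \<epsilon>) y c \<and> (\<Sum>\<^sub>\<infinity>x\<in>E. norm (c x)) \<le> K"
proof -
  have "0 \<le> K" using Kbal_nonneg[of E "nbhd \<Lambda> \<epsilon>"] K by simp
  have countable: "countable E" by (rule separated_imp_countable[OF E])
  have "\<forall>n. \<exists>c. balayage_coeffs E (nbhd \<Lambda> \<epsilon>) y c \<and> (\<Sum>\<^sub>\<infinity>x\<in>E. norm (c x)) < K + 1 / (real n + 1)"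
    using balayage_coeffs_near_optimal[OF countable K] by simp
  then obtain cn where bal_n: "\<And>n. balayage_coeffs E (nbhd \<Lambda> \<epsilon>) y (cn n)"
    and bound_n: "\<And>n. (\<Sum>\<^sub>\<infinity>x\<in>E. norm (cn n x)) < K + 1 / (real n + 1)"
    by metis
  have vanish_n: "\<And>n x. x \<notin> E \<Longrightarrow> cn n x = 0" and summable_n: "\<And>n. (\<lambda>x. norm (cn n x)) summable_on E"
    using bal_n by (simp_all add: balayage_coeffs_def)
  have bound1: "(\<Sum>\<^sub>\<infinity>x\<in>E. norm (cn n x)) \<le> K + 1" for n
    using bound_n[of n] by (smt (verit) divide_le_eq_1 of_nat_0_le_iff)
  have "norm (cn n x) \<le> K + 1" for n x
  proof (cases "x \<in> E")
    case True
    then have "(\<Sum>x\<in>{x}. norm (cn n x)) \<le> (\<Sum>\<^sub>\<infinity>x\<in>E. norm (cn n x))"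
      by (intro finite_sum_le_infsum[OF summable_n]) auto
    then show ?thesis using bound1[of n] by simp
  qed (use vanish_n \<open>0 \<le> K\<close> in simp)
  then obtain d c where d: "strict_mono d" and vanish: "\<And>x. x \<notin> E \<Longrightarrow> c x = 0"
    and lim: "\<And>x. x \<in> E \<Longrightarrow> (\<lambda>j. cn (d j) x) \<longlonglongrightarrow> c x"
    using pointwise_convergent_subsequence[OF countable] by blast
  have bound_d: "(\<Sum>\<^sub>\<infinity>x\<in>E. norm (cn (d j) x)) \<le> K + 1 / (real j + 1)" for j
  proof -
    have "real j \<le> real (d j)" using seq_suble[OF d] by simp
    then have "1 / (real (d j) + 1) \<le> 1 / (real j + 1)" by (simp add: frac_le)
    then show ?thesis using bound_n[of "d j"] by simp
  qed
  have "(\<lambda>j. K + 1 / (real j + 1)) \<longlonglongrightarrow> K"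
    using tendsto_add[OF tendsto_const[of K] LIMSEQ_inverse_real_of_nat]
    by (simp add: inverse_eq_divide add.commute)
  note limit = abs_summable_on_pointwise_limit[where cn="\<lambda>j. cn (d j)", OF lim summable_n bound_d this]
  have summable: "(\<lambda>x. norm (c x)) summable_on E"
    by (rule limit(1))
  have bound: "(\<Sum>\<^sub>\<infinity>x\<in>E. norm (c x)) \<le> K"
    by (rule limit(2))
  have "ft_coeffs c E \<gamma> = cis (- 2 * pi * (y \<bullet> \<gamma>))" if "\<gamma> \<in> nbhd \<Lambda> \<epsilon>" for \<gamma>
  proof (rule ft_coeffs_eq_on_nbhd[OF vanish summable \<open>closed \<Lambda>\<close> eps_pos _ that])
    fix \<gamma>' :: 'a assume "infdist \<gamma>' \<Lambda> < \<epsilon>"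
    then show "ft_coeffs c E \<gamma>' = cis (- 2 * pi * (y \<bullet> \<gamma>'))"
      using \<open>0 \<le> K\<close> bound by (intro ft_coeffs_limit_interior[OF E bal_n bound1 vanish summable _ lim]) auto
  qed
  then have "balayage_coeffs E (nbhd \<Lambda> \<epsilon>) y c"
    using vanish summable by (simp add: balayage_coeffs_def)
  then show ?thesis
    using bound by blast
qed

lemma ft_coeffs_window_minus_dirac:
  fixes \<Lambda> :: "'a set"
  assumes "countable E" and bal: "balayage_coeffs E (nbhd \<Lambda> \<epsilon>) y c" and "\<gamma> \<in> \<Lambda>"
  shows "ft_coeffs (\<lambda>x. h (x - y) * c x - (if x = y then 1 else 0)) (insert y E) \<gamma> = 0"
proof -
  have c: "point_masses c E"
    using assms(1) bal by (rule balayage_coeffs_point_masses)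
  then interpret point_masses c E .
  obtain B where B: "\<And>x. norm (h x) \<le> B" using bounded by blast
  have "(\<lambda>x. (cis (- 2 * pi * (x \<bullet> \<gamma>)) * h (x - y)) * c x) summable_on E"
    by (rule abs_summable_summable[OF abs_summable_on_mult_bounded[OF summable, where C=B]])
      (simp add: norm_mult B)
  then have "(\<lambda>x. cis (- 2 * pi * (x \<bullet> \<gamma>)) * (h (x - y) * c x)) summable_on E"
    by (simp add: mult.assoc)
  from has_sum_minus_dirac[of E "\<lambda>x. h (x - y) * c x", OF _ this]
  have "ft_coeffs (\<lambda>x. h (x - y) * c x - (if x = y then 1 else 0)) (insert y E) \<gamma>
      = (\<Sum>\<^sub>\<infinity>x\<in>E. h (1 *\<^sub>R (x - y)) * cis (- 2 * pi * (x \<bullet> \<gamma>)) * c x) - cis (- 2 * pi * (y \<bullet> \<gamma>))"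
    unfolding ft_coeffs_def using vanish by (auto dest!: infsumI simp: mult_ac)
  also have "(\<Sum>\<^sub>\<infinity>x\<in>E. h (1 *\<^sub>R (x - y)) * cis (- 2 * pi * (x \<bullet> \<gamma>)) * c x)
      = h (1 *\<^sub>R (y - y)) * cis (- 2 * pi * (y \<bullet> \<gamma>))"
  proof (rule infsum_window_eq_dirac[OF c])
    fix \<xi> :: 'a assume "norm \<xi> \<le> \<epsilon>"
    then have "\<gamma> - 1 *\<^sub>R \<xi> \<in> nbhd \<Lambda> \<epsilon>"
      using infdist_le[OF \<open>\<gamma> \<in> \<Lambda>\<close>, of "\<gamma> - \<xi>"] by (simp add: nbhd_def dist_norm)
    then show "ft_coeffs c E (\<gamma> - 1 *\<^sub>R \<xi>) = cis (- 2 * pi * (y \<bullet> (\<gamma> - 1 *\<^sub>R \<xi>)))"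
      using bal by (simp add: balayage_coeffs_def)
  qed
  finally show ?thesis
    by (simp add: at_0)
qed

text \<open>The measure \<open>\<Sum>\<^sub>x h (x - y) c x \<delta>\<^sub>x - \<delta>\<^sub>y\<close> has Fourier transform vanishing on \<open>\<Lambda>\<close>,
  so it annihilates \<open>\<C>(\<Lambda>)\<close> when \<open>\<Lambda>\<close> is an S-set.\<close>

lemma reconstruction:
  fixes \<Lambda> :: "'a set"
  assumes "countable E" and bal: "balayage_coeffs E (nbhd \<Lambda> \<epsilon>) y c"
    and "S_set \<Lambda>" and f: "f \<in> Cspec \<Lambda>"
  shows "((\<lambda>x. f x * c x * h (x - y)) has_sum f y) E"
proof -
  obtain B where B: "\<And>x. norm (h x) \<le> B" using bounded by blast
  define hc where "hc x = h (x - y) * c x" for x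
  have hc: "point_masses hc E"
    unfolding hc_def using balayage_coeffs_point_masses[OF assms(1) bal] B
    by (rule point_masses_mult_bounded)
  interpret D: point_masses "\<lambda>x. hc x - (if x = y then 1 else 0)" "insert y E"
    by (rule point_masses_minus_dirac[OF hc])
  obtain C where C: "\<And>x. norm (f x) \<le> C"
    using f unfolding Cspec_def bounded_iff by blast
  have [measurable]: "f \<in> borel_measurable borel"
    using f unfolding Cspec_def by (auto intro: borel_measurable_continuous_onI)
  have summable: "(\<lambda>x. f x * hc x) summable_on E"
    by (rule abs_summable_summable[OF abs_summable_on_mult_bounded[OF point_masses.summable[OF hc] C]])
  have "(\<Sum>\<^sub>\<infinity>x\<in>E. f x * hc x) - f y = (\<Sum>\<^sub>\<infinity>x\<in>insert y E. f x * (hc x - (if x = y then 1 else 0)))"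
    by (rule infsumI[OF has_sum_minus_dirac[OF point_masses.vanish[OF hc] summable, of y], symmetric])
  also have "\<dots> = (\<integral>x. f x * point_mass_phase (\<lambda>x. hc x - (if x = y then 1 else 0)) x
      \<partial>point_mass_measure (\<lambda>x. hc x - (if x = y then 1 else 0)))"
    by (rule D.integral_point_masses(2)[OF _ C, symmetric]) measurable
  also have "\<dots> = 0"
  proof -
    have "ftm (point_mass_measure (\<lambda>x. hc x - (if x = y then 1 else 0)))
        (point_mass_phase (\<lambda>x. hc x - (if x = y then 1 else 0))) \<gamma> = 0" if "\<gamma> \<in> \<Lambda>" for \<gamma>
      unfolding D.ftm_point_masses unfolding hc_def by (rule ft_coeffs_window_minus_dirac[OF assms(1) bal that])
    then show ?thesis
      using \<open>S_set \<Lambda>\<close> f D.bcm_point_masses unfolding S_set_def by blast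
  qed
  finally have "(\<Sum>\<^sub>\<infinity>x\<in>E. f x * hc x) = f y" by simp
  with summable show ?thesis
    using has_sum_infsum by (fastforce simp: hc_def mult_ac)
qed

end


text \<open>The growth conditions on \<open>\<Omega>\<close>, strict multiplicity of \<open>\<Lambda>\<close> and the balayage hypothesis are
  only needed for the existence of \<open>\<epsilon>\<close> and \<open>h\<close>, which the statement takes as given; of the
  decay of \<open>h\<close> only \<open>h(x) \<rightarrow> 0\<close> is used.\<close>

theorem theorem2p2:
  fixes \<Omega> :: "real \<Rightarrow> real"
    and \<Lambda> E :: "'a::euclidean_space set"
    and \<epsilon> :: real
    and h :: "'a \<Rightarrow> complex"
  assumes Om_cont: "continuous_on {0..} \<Omega>"
    and Om_pos: "\<forall>r\<ge>0. \<Omega> r > 0"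
    and Om_mono: "mono_on {0..} \<Omega>"
    and Om_inf: "filterlim \<Omega> at_top at_top"
    and Om_int1: "set_integrable lborel {1..} (\<lambda>r. \<Omega> r / r\<^sup>2)"
    and Om_int2: "integrable lborel (\<lambda>x::'a. exp (- \<Omega> (norm x)))"
    and Om_pow: "\<exists>a<1. \<exists>r0\<ge>0. \<forall>r\<ge>r0. \<Omega> r > r powr a"
    and Lam: "compact \<Lambda>" "S_set \<Lambda>" "strict_mult \<Lambda>"
    and E: "closed E" "separated E"
    and bal: "balayage E \<Lambda>"
    and eps: "\<epsilon> > 0" "Kbal E (nbhd \<Lambda> \<epsilon>) < \<infinity>"
    and h_int: "integrable lborel h"
    and h_cont: "continuous_on UNIV h"
    and h0: "h 0 = 1"
    and h_supp: "\<forall>\<gamma>. norm \<gamma> > \<epsilon> \<longrightarrow> ft h \<gamma> = 0"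
    and h_decay: "\<exists>C R. \<forall>x. norm x \<ge> R \<longrightarrow> cmod (h x) \<le> C * exp (- \<Omega> (norm x))"
  shows "\<exists>a :: 'a \<Rightarrow> 'a \<Rightarrow> complex.
     (\<forall>y. (\<lambda>x. cmod (a y x)) summable_on E \<and>
          (\<forall>\<gamma>\<in>nbhd \<Lambda> \<epsilon>. infsum (\<lambda>x. a y x * cis (- 2 * pi * (x \<bullet> \<gamma>))) E
                             = cis (- 2 * pi * (y \<bullet> \<gamma>)))) \<and>
     (SUP y. ereal (infsum (\<lambda>x. cmod (a y x)) E)) \<le> Kbal E (nbhd \<Lambda> \<epsilon>) \<and>
     Kbal E (nbhd \<Lambda> \<epsilon>) < \<infinity> \<and>
     (\<forall>y. \<forall>f\<in>Cspec \<Lambda>. ((\<lambda>x. f x * a y x * h (x - y)) has_sum f y) E) \<and>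
     (\<forall>y. \<forall>\<gamma>\<in>\<Lambda>. ((\<lambda>x. a y x * h (x - y) * cis (2 * pi * (x \<bullet> \<gamma>)))
                      has_sum cis (2 * pi * (y \<bullet> \<gamma>))) E)"
proof -
  interpret window h \<epsilon>
    using eps(1) h_int h_cont h_supp h0 tendsto_zero_if_exp_decay[OF Om_inf h_decay]
    by unfold_locales auto
  obtain K where K: "Kbal E (nbhd \<Lambda> \<epsilon>) = ereal K"
    using eps(2) Kbal_nonneg[of E "nbhd \<Lambda> \<epsilon>"] by (cases "Kbal E (nbhd \<Lambda> \<epsilon>)") auto
  obtain a where bal_a: "\<And>y. balayage_coeffs E (nbhd \<Lambda> \<epsilon>) y (a y)"
    and bound_a: "\<And>y. (\<Sum>\<^sub>\<infinity>x\<in>E. norm (a y x)) \<le> K"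
    using balayage_coeffs_optimal[OF E(2) compact_imp_closed[OF Lam(1)] K] by metis
  have reconstruct: "((\<lambda>x. f x * a y x * h (x - y)) has_sum f y) E" if "f \<in> Cspec \<Lambda>" for f y
    by (rule reconstruction[OF separated_imp_countable[OF E(2)] bal_a Lam(2) that])
  have "((\<lambda>x. a y x * h (x - y) * cis (2 * pi * (x \<bullet> \<gamma>))) has_sum cis (2 * pi * (y \<bullet> \<gamma>))) E"
    if "\<gamma> \<in> \<Lambda>" for y \<gamma>
    using reconstruct[OF cis_in_Cspec[OF that]] by (simp add: mult_ac)
  moreover have "(SUP y. ereal (\<Sum>\<^sub>\<infinity>x\<in>E. norm (a y x))) \<le> Kbal E (nbhd \<Lambda> \<epsilon>)"
    unfolding K by (rule SUP_least) (simp add: bound_a)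
  ultimately show ?thesis
    using bal_a reconstruct eps(2) by (intro exI[of _ a]) (auto simp: balayage_coeffs_def ft_coeffs_def)
qed

end
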